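(* Let $C(\mathscr{H}_{\mathbb{A}}^{13})=\mathscr{H}_{\mathbb{A}}^{13}\times\mathbb{A}^1_v\subset\operatorname{Spec}S_{\mathscr{H}}[v]$ be the cone over $\mathscr{H}_{\mathbb{A}}^{13}$ with one extra coordinate $v$. Then both $C(\mathscr{H}_{\mathbb{A}}^{13})\cap\{v=u_1=0\}$ and $C(\mathscr{H}_{\mathbb{A}}^{13})\cap\{\bm{x}_1=\bm{0}\}$ have codimension at least $2$ in $C(\mathscr{H}_{\mathbb{A}}^{13})$.
   Context: Work over $\mathbb{C}$. $S_{\mathscr{H}}$ is the polynomial ring in $u_1,u_2,u_3$, $x_{ij}$ ($i\in\{1,2\},j\in\{1,2,3\}$), $p_{abc}$ ($a,b,c\in\{1,2\}$), and $\mathscr{H}_{\mathbb{A}}^{13}\subset\operatorname{Spec}S_{\mathscr{H}}$ is defined by $-u_1\bm{x}_1+D^{(3)}\bm{x}_2=\bm{0}$, $-u_2\bm{x}_2+D^{(1)}\bm{x}_3=\bm{0}$, $-u_3\bm{x}_3-(D^{(2)})^{\dagger}\bm{x}_1=\bm{0}$, $u_2u_3+\det D^{(1)}=0$, $u_3u_1+\det D^{(2)}=0$, $u_1u_2+\det D^{(3)}=0$, where $\bm{x}_j=(x_{1j},x_{2j})^t$, $M^\dagger$ is the adjugate, $D^{(1)}_{ij}=p_{1ij}x_{21}-p_{2ij}x_{11}$, $D^{(2)}_{ij}=p_{i1j}x_{22}-p_{i2j}x_{12}$, $D^{(3)}_{ij}=p_{ij1}x_{23}-p_{ij2}x_{13}$,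 $D^{(k)}$ has rows $(-D^{(k)}_{12},D^{(k)}_{11})$, $(-D^{(k)}_{22},D^{(k)}_{21})$. $C(\mathscr{H}_{\mathbb{A}}^{13})$ is the subscheme of $\operatorname{Spec}S_{\mathscr{H}}[v]$ defined by the same equations. *)

theory Defs
  imports Main "HOL-Library.Extended_Nat"
begin

datatype idx2 = I1 | I2
datatype idx3 = J1 | J2 | J3

text \<open>The 18 coordinates u_k, x_ij, p_abc, v (constructors Uc, Xc, Pc, Vc).  A closed point of Spec S_H[v] over C is a map var => complex.\<close>
datatype var = Uc idx3 | Xc idx2 idx3 | Pc idx2 idx2 idx2 | Vc

type_synonym pt = "var \<Rightarrow> complex"

inductive_set poly_fun :: "(pt \<Rightarrow> complex) set" where
  pf_const: "(\<lambda>a. c) \<in> poly_fun"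
| pf_coord: "(\<lambda>a. a i) \<in> poly_fun"
| pf_add: "f \<in> poly_fun \<Longrightarrow> g \<in> poly_fun \<Longrightarrow> (\<lambda>a. f a + g a) \<in> poly_fun"
| pf_mult: "f \<in> poly_fun \<Longrightarrow> g \<in> poly_fun \<Longrightarrow> (\<lambda>a. f a * g a) \<in> poly_fun"

definition zariski_closed :: "pt set \<Rightarrow> bool" where
  "zariski_closed S \<longleftrightarrow> (\<exists>F \<subseteq> poly_fun. S = {a. \<forall>f\<in>F. f a = 0})"

definition irred_closed :: "pt set \<Rightarrow> bool" where
  "irred_closed Y \<longleftrightarrow> Y \<noteq> {} \<and> zariski_closed Y \<and>
     (\<forall>A B. zariski_closed A \<and> zariski_closed B \<and> Y \<subseteq> A \<union> B \<longrightarrow> Y \<subseteq> A \<or> Y \<subseteq> B)"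

definition codim_irr :: "pt set \<Rightarrow> pt set \<Rightarrow> enat" where
  "codim_irr X Y = Sup {enat n | n. \<exists>c :: nat \<Rightarrow> pt set. c 0 = Y \<and>
      (\<forall>i<n. c i \<subset> c (Suc i)) \<and> (\<forall>i\<le>n. irred_closed (c i) \<and> c i \<subseteq> X)}"

text \<open>Codimension of a closed subset Z of X: infimum over irreducible closed Y contained in Z
  (infinity if Z is empty).\<close>
definition codim :: "pt set \<Rightarrow> pt set \<Rightarrow> enat" where
  "codim X Z = Inf {codim_irr X Y | Y. irred_closed Y \<and> Y \<subseteq> Z}"

definition Dent :: "idx3 \<Rightarrow> pt \<Rightarrow> idx2 \<Rightarrow> idx2 \<Rightarrow> complex" where
  "Dent k a i j = (case k of
      J1 \<Rightarrow> a (Pc I1 i j) * a (Xc I2 J1) - a (Pc I2 i j) * a (Xc I1 J1)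
    | J2 \<Rightarrow> a (Pc i I1 j) * a (Xc I2 J2) - a (Pc i I2 j) * a (Xc I1 J2)
    | J3 \<Rightarrow> a (Pc i j I1) * a (Xc I2 J3) - a (Pc i j I2) * a (Xc I1 J3))"

definition Dmat :: "idx3 \<Rightarrow> pt \<Rightarrow> idx2 \<Rightarrow> idx2 \<Rightarrow> complex" where
  "Dmat k a r s = (case s of I1 \<Rightarrow> - Dent k a r I2 | I2 \<Rightarrow> Dent k a r I1)"

definition adj2 :: "(idx2 \<Rightarrow> idx2 \<Rightarrow> complex) \<Rightarrow> idx2 \<Rightarrow> idx2 \<Rightarrow> complex" where
  "adj2 M r s = (case (r, s) of
      (I1, I1) \<Rightarrow> M I2 I2 | (I1, I2) \<Rightarrow> - M I1 I2
    | (I2, I1) \<Rightarrow> - M I2 I1 | (I2, I2) \<Rightarrow> M I1 I1)"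

definition det2 :: "(idx2 \<Rightarrow> idx2 \<Rightarrow> complex) \<Rightarrow> complex" where
  "det2 M = M I1 I1 * M I2 I2 - M I1 I2 * M I2 I1"

definition mv :: "(idx2 \<Rightarrow> idx2 \<Rightarrow> complex) \<Rightarrow> (idx2 \<Rightarrow> complex) \<Rightarrow> idx2 \<Rightarrow> complex" where
  "mv M x r = M r I1 * x I1 + M r I2 * x I2"

definition xvec :: "pt \<Rightarrow> idx3 \<Rightarrow> idx2 \<Rightarrow> complex" where
  "xvec a j i = a (Xc i j)"

definition H_eqs :: "pt \<Rightarrow> bool" where
  "H_eqs a \<longleftrightarrow>
     (\<forall>r. - a (Uc J1) * xvec a J1 r + mv (Dmat J3 a) (xvec a J2) r = 0) \<and>
     (\<forall>r. - a (Uc J2) * xvec a J2 r + mv (Dmat J1 a) (xvec a J3) r = 0) \<and>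
     (\<forall>r. - a (Uc J3) * xvec a J3 r - mv (adj2 (Dmat J2 a)) (xvec a J1) r = 0) \<and>
     a (Uc J2) * a (Uc J3) + det2 (Dmat J1 a) = 0 \<and>
     a (Uc J3) * a (Uc J1) + det2 (Dmat J2 a) = 0 \<and>
     a (Uc J1) * a (Uc J2) + det2 (Dmat J3 a) = 0"

text \<open>C(H^13_A) in Spec S_H[v]: same equations, v unconstrained.\<close>
definition coneH :: "pt set" where
  "coneH = {a. H_eqs a}"

end

(* coneH is irreducible.  Off the locus where some x_j vanishes the quadrics follow from the
   linear equations, and every solution is obtained from the normal form x_j = e_1 by the action
   of GL_2^3; this gives a polynomial parametrization of that open stratum.  Each point with
   x_1 = 0 is the limit t -> 0 of a polynomial curve of solutions which, for t nonzero, lie in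
   the open stratum and even in its divisor x_21 = 0 (a case analysis on which of x_2, x_3, u_1,
   u_2, u_3 vanish); the cyclic symmetry of the equations handles x_2 = 0 and x_3 = 0.
   Hence the locus x_1 = 0 sits inside the irreducible closure A of the image of the divisor
   x_21 = 0 of the parametrization, a proper subset of coneH, and every irreducible Y in it
   gives the chain Y < A < coneH.  For v = u_1 = 0 the chain is Y < Y x A^1_v < coneH. *)

theory Submission
  imports Defs "HOL-Computational_Algebra.Polynomial"
begin

section \<open>Polynomial functions and the Zariski closure\<close>

inductive_set polyfun :: "(('i \<Rightarrow> complex) \<Rightarrow> complex) set" where
  polyfun_const: "(\<lambda>a. c) \<in> polyfun"
| polyfun_coord: "(\<lambda>a. a i) \<in> polyfun"
| polyfun_add: "f \<in> polyfun \<Longrightarrow> g \<in> polyfun \<Longrightarrow> (\<lambda>a. f a + g a) \<in> polyfun"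
| polyfun_mult: "f \<in> polyfun \<Longrightarrow> g \<in> polyfun \<Longrightarrow> (\<lambda>a. f a * g a) \<in> polyfun"

lemma polyfun_diff: "f \<in> polyfun \<Longrightarrow> g \<in> polyfun \<Longrightarrow> (\<lambda>a. f a - g a) \<in> polyfun"
  using polyfun_add[OF _ polyfun_mult[OF polyfun_const, of g "-1"]] by simp

lemma polyfun_uminus: "f \<in> polyfun \<Longrightarrow> (\<lambda>a. - f a) \<in> polyfun"
  using polyfun_diff[OF polyfun_const, of f 0] by simp

lemmas polyfun_intros = polyfun.intros polyfun_diff polyfun_uminus

lemma poly_fun_eq_polyfun: "poly_fun = polyfun"
proof (intro set_eqI iffI)
  show "f \<in> polyfun" if "f \<in> poly_fun" for f
    using that by induction (auto intro: polyfun.intros)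
  show "f \<in> poly_fun" if "f \<in> polyfun" for f
    using that by induction (auto intro: poly_fun.intros)
qed

lemma polyfun_compose:
  assumes "f \<in> polyfun" and "\<And>i. (\<lambda>x. \<Phi> x i) \<in> polyfun"
  shows "(\<lambda>x. f (\<Phi> x)) \<in> polyfun"
  using assms by induction (auto intro: polyfun.intros)

definition univ_poly :: "(complex \<Rightarrow> complex) \<Rightarrow> bool" where
  "univ_poly h \<longleftrightarrow> (\<exists>p. \<forall>t. h t = poly p t)"

lemma univ_poly_const: "univ_poly (\<lambda>t. c)"
  unfolding univ_poly_def by (intro exI[of _ "[:c:]"]) auto

lemma univ_poly_id: "univ_poly (\<lambda>t. t)"
  unfolding univ_poly_def by (intro exI[of _ "[:0, 1:]"]) auto

lemma univ_poly_add: "univ_poly f \<Longrightarrow> univ_poly g \<Longrightarrow> univ_poly (\<lambda>t. f t + g t)"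
  unfolding univ_poly_def by (metis poly_add)

lemma univ_poly_mult: "univ_poly f \<Longrightarrow> univ_poly g \<Longrightarrow> univ_poly (\<lambda>t. f t * g t)"
  unfolding univ_poly_def by (metis poly_mult)

lemma univ_poly_diff: "univ_poly f \<Longrightarrow> univ_poly g \<Longrightarrow> univ_poly (\<lambda>t. f t - g t)"
  unfolding univ_poly_def by (metis poly_diff)

lemma univ_poly_if: "univ_poly f \<Longrightarrow> univ_poly g \<Longrightarrow> univ_poly (\<lambda>t. if c then f t else g t)"
  by (cases c) auto

lemmas univ_poly_intros =
  univ_poly_const univ_poly_id univ_poly_add univ_poly_mult univ_poly_diff univ_poly_if

lemma polyfun_along_curve:
  assumes "f \<in> polyfun" and "\<And>i. univ_poly (\<lambda>t. \<gamma> t i)"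
  shows "univ_poly (\<lambda>t. f (\<gamma> t))"
  using assms by induction (auto intro: univ_poly_intros)

lemma univ_poly_zero_divisor:
  assumes "univ_poly f" "univ_poly g" "\<And>t. f t * g t = 0"
  shows "(\<forall>t. f t = 0) \<or> (\<forall>t. g t = 0)"
proof -
  obtain p q where p: "\<And>t. f t = poly p t" and q: "\<And>t. g t = poly q t"
    using assms(1,2) unfolding univ_poly_def by blast
  with assms(3) have "poly (p * q) = poly 0" by auto
  then have "p = 0 \<or> q = 0" by (simp add: poly_eq_poly_eq_iff)
  with p q show ?thesis by auto
qed

lemma univ_poly_zero_at_0:
  assumes "univ_poly h" and "\<And>t. t \<noteq> 0 \<Longrightarrow> h t = 0"
  shows "h 0 = 0"
proof -
  obtain p where p: "\<And>t. h t = poly p t" using assms(1) unfolding univ_poly_def by blast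
  have "infinite (UNIV - {0::complex})"
    by (simp add: infinite_UNIV_char_0)
  moreover have "UNIV - {0} \<subseteq> {t. poly p t = 0}" using assms(2) p by auto
  ultimately have "infinite {t. poly p t = 0}" using finite_subset by blast
  then have "p = 0" using poly_roots_finite by blast
  then show ?thesis using p by simp
qed

text \<open>Restricting to the line through two points reduces to the univariate case.\<close>
lemma polyfun_zero_divisor:
  assumes "f \<in> polyfun" "g \<in> polyfun" and "\<And>x. f x * g x = 0"
  shows "(\<forall>x. f x = 0) \<or> (\<forall>x. g x = 0)"
proof (rule ccontr)
  assume "\<not> ?thesis"
  then obtain a b where a: "f a \<noteq> 0" and b: "g b \<noteq> 0" by auto
  define \<gamma> where "\<gamma> t i = a i + t * (b i - a i)" for t i
  have line: "univ_poly (\<lambda>t. \<gamma> t i)" for i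
    unfolding \<gamma>_def by (intro univ_poly_intros)
  have "(\<forall>t. f (\<gamma> t) = 0) \<or> (\<forall>t. g (\<gamma> t) = 0)"
    by (rule univ_poly_zero_divisor[OF polyfun_along_curve[OF assms(1) line]
          polyfun_along_curve[OF assms(2) line] assms(3)])
  moreover have "\<gamma> 0 = a" "\<gamma> 1 = b" unfolding \<gamma>_def by auto
  ultimately show False using a b by metis
qed

definition zclosure :: "pt set \<Rightarrow> pt set" where
  "zclosure S = {a. \<forall>f\<in>polyfun. (\<forall>s\<in>S. f s = 0) \<longrightarrow> f a = 0}"

lemma zariski_closed_iff: "zariski_closed S \<longleftrightarrow> (\<exists>F \<subseteq> polyfun. S = {a. \<forall>f\<in>F. f a = 0})"
  by (simp add: zariski_closed_def poly_fun_eq_polyfun)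

lemma zariski_closed_zclosure: "zariski_closed (zclosure S)"
  unfolding zariski_closed_iff zclosure_def
  by (intro exI[of _ "{f\<in>polyfun. \<forall>s\<in>S. f s = 0}"]) auto

lemma zclosure_superset: "S \<subseteq> zclosure S"
  unfolding zclosure_def by auto

lemma zclosure_minimal: "zariski_closed A \<Longrightarrow> S \<subseteq> A \<Longrightarrow> zclosure S \<subseteq> A"
  unfolding zariski_closed_iff zclosure_def by blast

lemma zclosure_mono: "S \<subseteq> T \<Longrightarrow> zclosure S \<subseteq> zclosure T"
  by (meson order_trans zariski_closed_zclosure zclosure_minimal zclosure_superset)

lemma zclosure_trans: "b \<in> zclosure S \<Longrightarrow> S \<subseteq> zclosure T \<Longrightarrow> b \<in> zclosure T"
  using zclosure_minimal[OF zariski_closed_zclosure] by blast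

lemma zariski_closed_coord_zero: "zariski_closed {a. a w = 0}"
  unfolding zariski_closed_iff by (intro exI[of _ "{\<lambda>a. a w}"]) (auto intro: polyfun.intros)

lemma zariski_closed_preimage:
  assumes "zariski_closed A" and "\<And>w. (\<lambda>x. \<Phi> x w) \<in> polyfun"
  shows "zariski_closed {x. \<Phi> x \<in> A}"
proof -
  obtain F where F: "F \<subseteq> polyfun" "A = {a. \<forall>f\<in>F. f a = 0}"
    using assms(1) unfolding zariski_closed_iff by blast
  have "(\<lambda>f x. f (\<Phi> x)) ` F \<subseteq> polyfun"
    using F(1) assms(2) polyfun_compose by blast
  moreover have "{x. \<Phi> x \<in> A} = {x. \<forall>h\<in>(\<lambda>f x. f (\<Phi> x)) ` F. h x = 0}"
    using F(2) by auto
  ultimately show ?thesis unfolding zariski_closed_iff by blast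
qed

lemma zclosure_image:
  assumes "\<And>w. (\<lambda>x. \<phi> x w) \<in> polyfun" and "b \<in> zclosure S"
  shows "\<phi> b \<in> zclosure (\<phi> ` S)"
  unfolding zclosure_def
proof (intro CollectI ballI impI)
  fix f :: "pt \<Rightarrow> complex"
  assume "f \<in> polyfun" and "\<forall>s\<in>\<phi> ` S. f s = 0"
  moreover have "(\<lambda>x. f (\<phi> x)) \<in> polyfun"
    using \<open>f \<in> polyfun\<close> assms(1) by (rule polyfun_compose)
  ultimately show "f (\<phi> b) = 0"
    using assms(2) unfolding zclosure_def by auto
qed

lemma zclosure_invariant:
  assumes "\<And>w. (\<lambda>x. \<phi> x w) \<in> polyfun" and "\<phi> ` S \<subseteq> S" and "b \<in> zclosure S"
  shows "\<phi> b \<in> zclosure S"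
  using zclosure_image[of \<phi>, OF assms(1,3)] zclosure_mono[OF assms(2)] by blast

lemma zclosure_curve_limit:
  assumes "\<And>w. univ_poly (\<lambda>t. \<gamma> t w)" and "\<And>t. t \<noteq> 0 \<Longrightarrow> \<gamma> t \<in> S"
  shows "\<gamma> 0 \<in> zclosure S"
  unfolding zclosure_def
proof (intro CollectI ballI impI)
  fix f :: "pt \<Rightarrow> complex"
  assume "f \<in> polyfun" and "\<forall>s\<in>S. f s = 0"
  then show "f (\<gamma> 0) = 0"
    using assms(2) by (intro univ_poly_zero_at_0[of "\<lambda>t. f (\<gamma> t)"]
        polyfun_along_curve[OF _ assms(1)]) auto
qed

lemma irred_closedD:
  assumes "irred_closed Y"
  shows "Y \<noteq> {}" "zariski_closed Y"
    "\<And>A B. zariski_closed A \<Longrightarrow> zariski_closed B \<Longrightarrow> Y \<subseteq> A \<union> B \<Longrightarrow> Y \<subseteq> A \<or> Y \<subseteq> B"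
  using assms unfolding irred_closed_def by simp_all

lemma irred_closed_zclosure_image:
  fixes \<Phi> :: "('i \<Rightarrow> complex) \<Rightarrow> pt"
  assumes "\<And>w. (\<lambda>x. \<Phi> x w) \<in> polyfun"
  shows "irred_closed (zclosure (range \<Phi>))"
  unfolding irred_closed_def
proof (intro conjI allI impI)
  show "zclosure (range \<Phi>) \<noteq> {}" using zclosure_superset[of "range \<Phi>"] by auto
  show "zariski_closed (zclosure (range \<Phi>))" by (rule zariski_closed_zclosure)
  fix A B
  assume AB: "zariski_closed A \<and> zariski_closed B \<and> zclosure (range \<Phi>) \<subseteq> A \<union> B"
  show "zclosure (range \<Phi>) \<subseteq> A \<or> zclosure (range \<Phi>) \<subseteq> B"
  proof (rule ccontr)
    assume "\<not> ?thesis"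
    then have "\<not> range \<Phi> \<subseteq> A" "\<not> range \<Phi> \<subseteq> B"
      using AB zclosure_minimal by blast+
    moreover obtain FA FB where F: "FA \<subseteq> polyfun" "A = {a. \<forall>f\<in>FA. f a = 0}"
      "FB \<subseteq> polyfun" "B = {a. \<forall>f\<in>FB. f a = 0}"
      using AB unfolding zariski_closed_iff by blast
    ultimately obtain x0 f x1 g where f: "f \<in> FA" "f (\<Phi> x0) \<noteq> 0" and g: "g \<in> FB" "g (\<Phi> x1) \<noteq> 0"
      by auto
    have "\<Phi> x \<in> A \<union> B" for x using AB zclosure_superset by blast
    then have "f (\<Phi> x) * g (\<Phi> x) = 0" for x using f g F by auto
    moreover have "(\<lambda>x. f (\<Phi> x)) \<in> polyfun" "(\<lambda>x. g (\<Phi> x)) \<in> polyfun"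
      using f g F assms by (auto intro: polyfun_compose)
    ultimately have "(\<forall>x. f (\<Phi> x) = 0) \<or> (\<forall>x. g (\<Phi> x) = 0)"
      by (intro polyfun_zero_divisor)
    then show False using f(2) g(2) by blast
  qed
qed

definition cylinder :: "var \<Rightarrow> pt set \<Rightarrow> pt set" where
  "cylinder w Y = {a. a(w := 0) \<in> Y}"

lemma polyfun_fun_upd: "(\<lambda>x. (x(w := c)) w') \<in> polyfun"
  by (cases "w' = w") (auto intro: polyfun.intros)

lemma univ_poly_fun_upd: "univ_poly (\<lambda>c. (y(w := c)) w')"
  by (cases "w' = w") (auto intro: univ_poly_intros)

lemma cylinder_slices:
  assumes Y: "irred_closed Y" and Y0: "\<And>y. y \<in> Y \<Longrightarrow> y w = 0"
    and "zariski_closed A" "zariski_closed B" "cylinder w Y \<subseteq> A \<union> B"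
  shows "Y \<subseteq> {y. y(w := c) \<in> A} \<or> Y \<subseteq> {y. y(w := c) \<in> B}"
proof (rule irred_closedD(3)[OF Y])
  show "zariski_closed {y. y(w := c) \<in> A}" "zariski_closed {y. y(w := c) \<in> B}"
    using assms(3,4) by (simp_all add: zariski_closed_preimage[OF _ polyfun_fun_upd])
  have "y(w := c) \<in> cylinder w Y" if "y \<in> Y" for y
    using that Y0[OF that] by (simp add: cylinder_def fun_upd_idem)
  then show "Y \<subseteq> {y. y(w := c) \<in> A} \<union> {y. y(w := c) \<in> B}"
    using assms(5) by blast
qed

text \<open>If both A and B miss points of the cylinder, witnessed by polynomials f and g, then
  f * g vanishes on every vertical line through Y, so f or g vanishes on a whole line.\<close>
lemma irred_closed_cylinder:
  assumes Y: "irred_closed Y" and Y0: "\<And>y. y \<in> Y \<Longrightarrow> y w = 0"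
  shows "irred_closed (cylinder w Y)"
  unfolding irred_closed_def
proof (intro conjI allI impI)
  obtain y where y: "y \<in> Y" using irred_closedD(1)[OF Y] by blast
  then have "y(w := 0) = y" using Y0 by auto
  with y have "y \<in> cylinder w Y" by (simp add: cylinder_def)
  then show "cylinder w Y \<noteq> {}" by blast
  show "zariski_closed (cylinder w Y)"
    unfolding cylinder_def using irred_closedD(2)[OF Y] polyfun_fun_upd
    by (rule zariski_closed_preimage)
  fix A B
  assume AB: "zariski_closed A \<and> zariski_closed B \<and> cylinder w Y \<subseteq> A \<union> B"
  show "cylinder w Y \<subseteq> A \<or> cylinder w Y \<subseteq> B"
  proof (rule ccontr)
    assume "\<not> ?thesis"
    then obtain a0 a1 where a0: "a0 \<in> cylinder w Y" "a0 \<notin> A" and a1: "a1 \<in> cylinder w Y" "a1 \<notin> B"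
      by auto
    obtain FA FB where F: "FA \<subseteq> polyfun" "A = {a. \<forall>f\<in>FA. f a = 0}"
      "FB \<subseteq> polyfun" "B = {a. \<forall>f\<in>FB. f a = 0}"
      using AB unfolding zariski_closed_iff by blast
    obtain f g where f: "f \<in> FA" "f a0 \<noteq> 0" and g: "g \<in> FB" "g a1 \<noteq> 0"
      using a0(2) a1(2) F by auto
    define y0 where "y0 = a0(w := 0)"
    define y1 where "y1 = a1(w := 0)"
    have y01: "y0 \<in> Y" "y1 \<in> Y" using a0 a1 unfolding cylinder_def y0_def y1_def by auto
    have slice: "Y \<subseteq> {y. y(w := c) \<in> A} \<or> Y \<subseteq> {y. y(w := c) \<in> B}" for c
      using Y0 AB by (intro cylinder_slices[OF Y]) auto
    have "f (y0(w := c)) * g (y1(w := c)) = 0" for c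
    proof (cases "Y \<subseteq> {y. y(w := c) \<in> A}")
      case True
      then show ?thesis using y01(1) f(1) F(2) by auto
    next
      case False
      then show ?thesis using slice[of c] y01(2) g(1) F(4) by auto
    qed
    moreover have "f \<in> polyfun" "g \<in> polyfun" using f(1) g(1) F(1,3) by auto
    ultimately have "(\<forall>c. f (y0(w := c)) = 0) \<or> (\<forall>c. g (y1(w := c)) = 0)"
      by (intro univ_poly_zero_divisor[of "\<lambda>c. f (y0(w := c))" "\<lambda>c. g (y1(w := c))"]
          polyfun_along_curve[OF _ univ_poly_fun_upd])
    moreover have "y0(w := a0 w) = a0" "y1(w := a1 w) = a1" unfolding y0_def y1_def by auto
    ultimately show False using f(2) g(2) by metis
  qed
qed

lemma codim_ge_2I:
  assumes "irred_closed X"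
    and "\<And>Y. irred_closed Y \<Longrightarrow> Y \<subseteq> Z \<Longrightarrow> \<exists>Y1. irred_closed Y1 \<and> Y \<subset> Y1 \<and> Y1 \<subset> X"
  shows "codim X Z \<ge> 2"
  unfolding codim_def
proof (rule Inf_greatest, clarify)
  fix Y assume Y: "irred_closed Y" "Y \<subseteq> Z"
  obtain Y1 where Y1: "irred_closed Y1" "Y \<subset> Y1" "Y1 \<subset> X"
    using assms(2)[OF Y] by blast
  have YX: "Y \<subseteq> X" "Y1 \<subseteq> X" using Y1(2,3) by (meson less_imp_le order_trans)+
  define c where "c = (\<lambda>i::nat. if i = 0 then Y else if i = 1 then Y1 else X)"
  have "c 0 = Y \<and> (\<forall>i<2. c i \<subset> c (Suc i)) \<and> (\<forall>i\<le>2. irred_closed (c i) \<and> c i \<subseteq> X)"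
  proof (intro conjI allI impI)
    show "c 0 = Y" unfolding c_def by simp
    fix i :: nat
    show "i < 2 \<Longrightarrow> c i \<subset> c (Suc i)" using Y1 unfolding c_def
      by (cases i) (auto simp: less_Suc_eq)
    assume "i \<le> 2"
    then show "irred_closed (c i)" "c i \<subseteq> X" using Y1(1) Y(1) YX assms(1) unfolding c_def by auto
  qed
  then have "enat 2 \<in> {enat n | n. \<exists>c :: nat \<Rightarrow> pt set. c 0 = Y \<and>
      (\<forall>i<n. c i \<subset> c (Suc i)) \<and> (\<forall>i\<le>n. irred_closed (c i) \<and> c i \<subseteq> X)}" by blast
  then have "enat 2 \<le> codim_irr X Y" unfolding codim_irr_def by (rule Sup_upper)
  then show "2 \<le> codim_irr X Y" by (simp add: numeral_eq_enat)
qed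

section \<open>The equations in tensor form\<close>

text \<open>With perp y = (y_2, -y_1), so that the dot product of w with perp y is det(w, y), the
  defining equations read u_1 x_1 = p(-, perp x_2, perp x_3) (and cyclically) together with the
  quadrics u_2 u_3 + det p(perp x_1, -, -) = 0 (and cyclically).\<close>

definition perp :: "(idx2 \<Rightarrow> complex) \<Rightarrow> idx2 \<Rightarrow> complex" where
  "perp y = (\<lambda>i. case i of I1 \<Rightarrow> y I2 | I2 \<Rightarrow> - y I1)"

definition unit_vec :: "idx2 \<Rightarrow> idx2 \<Rightarrow> complex" where
  "unit_vec r = (\<lambda>i. if i = r then 1 else 0)"

definition nonzero :: "(idx2 \<Rightarrow> complex) \<Rightarrow> bool" where
  "nonzero y \<longleftrightarrow> y I1 \<noteq> 0 \<or> y I2 \<noteq> 0"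

definition tri ::
  "(idx2 \<Rightarrow> idx2 \<Rightarrow> idx2 \<Rightarrow> complex) \<Rightarrow> (idx2 \<Rightarrow> complex) \<Rightarrow> (idx2 \<Rightarrow> complex) \<Rightarrow> (idx2 \<Rightarrow> complex) \<Rightarrow> complex"
where
  "tri P x y z =
     P I1 I1 I1 * x I1 * y I1 * z I1 + P I1 I1 I2 * x I1 * y I1 * z I2
   + P I1 I2 I1 * x I1 * y I2 * z I1 + P I1 I2 I2 * x I1 * y I2 * z I2
   + P I2 I1 I1 * x I2 * y I1 * z I1 + P I2 I1 I2 * x I2 * y I1 * z I2
   + P I2 I2 I1 * x I2 * y I2 * z I1 + P I2 I2 I2 * x I2 * y I2 * z I2"

definition point ::
  "(idx3 \<Rightarrow> complex) \<Rightarrow> (idx3 \<Rightarrow> idx2 \<Rightarrow> complex) \<Rightarrow> (idx2 \<Rightarrow> idx2 \<Rightarrow> idx2 \<Rightarrow> complex) \<Rightarrow> complex \<Rightarrow> pt"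
where
  "point U X P v = (\<lambda>w. case w of Uc k \<Rightarrow> U k | Xc i j \<Rightarrow> X j i | Pc a b c \<Rightarrow> P a b c | Vc \<Rightarrow> v)"

definition u_of :: "pt \<Rightarrow> idx3 \<Rightarrow> complex" where "u_of a k = a (Uc k)"
definition x_of :: "pt \<Rightarrow> idx3 \<Rightarrow> idx2 \<Rightarrow> complex" where "x_of a j i = a (Xc i j)"
definition p_of :: "pt \<Rightarrow> idx2 \<Rightarrow> idx2 \<Rightarrow> idx2 \<Rightarrow> complex" where "p_of a i j k = a (Pc i j k)"

lemma point_coords: "point (u_of a) (x_of a) (p_of a) (a Vc) = a"
  by (rule ext, case_tac x) (simp_all add: point_def u_of_def x_of_def p_of_def)

lemma point_simps [simp]:
  "point U X P v (Uc k) = U k" "point U X P v (Xc i j) = X j i"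
  "point U X P v (Pc a b c) = P a b c" "point U X P v Vc = v"
  by (simp_all add: point_def)

lemma coords_point [simp]:
  "u_of (point U X P v) = U" "x_of (point U X P v) = X" "p_of (point U X P v) = P"
  by (simp_all add: u_of_def x_of_def p_of_def fun_eq_iff)

definition lin_eqs ::
  "(idx3 \<Rightarrow> complex) \<Rightarrow> (idx3 \<Rightarrow> idx2 \<Rightarrow> complex) \<Rightarrow> (idx2 \<Rightarrow> idx2 \<Rightarrow> idx2 \<Rightarrow> complex) \<Rightarrow> bool"
where
  "lin_eqs U X P \<longleftrightarrow>
    (\<forall>r. U J1 * X J1 r = tri P (unit_vec r) (perp (X J2)) (perp (X J3))) \<and>
    (\<forall>r. U J2 * X J2 r = tri P (perp (X J1)) (unit_vec r) (perp (X J3))) \<and>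
    (\<forall>r. U J3 * X J3 r = tri P (perp (X J1)) (perp (X J2)) (unit_vec r))"

definition quad_eqs ::
  "(idx3 \<Rightarrow> complex) \<Rightarrow> (idx3 \<Rightarrow> idx2 \<Rightarrow> complex) \<Rightarrow> (idx2 \<Rightarrow> idx2 \<Rightarrow> idx2 \<Rightarrow> complex) \<Rightarrow> bool"
where
  "quad_eqs U X P \<longleftrightarrow>
    U J2 * U J3 + det2 (\<lambda>b c. tri P (perp (X J1)) (unit_vec b) (unit_vec c)) = 0 \<and>
    U J3 * U J1 + det2 (\<lambda>a c. tri P (unit_vec a) (perp (X J2)) (unit_vec c)) = 0 \<and>
    U J1 * U J2 + det2 (\<lambda>a b. tri P (unit_vec a) (unit_vec b) (perp (X J3))) = 0"

definition H_sys ::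
  "(idx3 \<Rightarrow> complex) \<Rightarrow> (idx3 \<Rightarrow> idx2 \<Rightarrow> complex) \<Rightarrow> (idx2 \<Rightarrow> idx2 \<Rightarrow> idx2 \<Rightarrow> complex) \<Rightarrow> bool"
where
  "H_sys U X P \<longleftrightarrow> lin_eqs U X P \<and> quad_eqs U X P"

lemma all_idx2: "(\<forall>r. Q r) \<longleftrightarrow> Q I1 \<and> Q I2"
  by (metis idx2.exhaust)

lemmas coord_defs = tri_def perp_def unit_vec_def Dent_def Dmat_def adj2_def det2_def mv_def xvec_def

lemma H_eqs_point: "H_eqs (point U X P v) \<longleftrightarrow> H_sys U X P"
proof -
  have eq_iff: "(A::complex) = -(B - C) \<Longrightarrow> (A = 0) \<longleftrightarrow> (B = C)" for A B C
    by auto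
  let ?a = "point U X P v"
  have "(- ?a (Uc J1) * xvec ?a J1 r + mv (Dmat J3 ?a) (xvec ?a J2) r = 0)
     \<longleftrightarrow> (U J1 * X J1 r = tri P (unit_vec r) (perp (X J2)) (perp (X J3)))"
    "(- ?a (Uc J2) * xvec ?a J2 r + mv (Dmat J1 ?a) (xvec ?a J3) r = 0)
     \<longleftrightarrow> (U J2 * X J2 r = tri P (perp (X J1)) (unit_vec r) (perp (X J3)))"
    "(- ?a (Uc J3) * xvec ?a J3 r - mv (adj2 (Dmat J2 ?a)) (xvec ?a J1) r = 0)
     \<longleftrightarrow> (U J3 * X J3 r = tri P (perp (X J1)) (perp (X J2)) (unit_vec r))" for r
    by ((rule eq_iff, cases r); simp add: coord_defs algebra_simps)+
  moreover have
    "?a (Uc J2) * ?a (Uc J3) + det2 (Dmat J1 ?a) =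
       U J2 * U J3 + det2 (\<lambda>b c. tri P (perp (X J1)) (unit_vec b) (unit_vec c))"
    "?a (Uc J3) * ?a (Uc J1) + det2 (Dmat J2 ?a) =
       U J3 * U J1 + det2 (\<lambda>a c. tri P (unit_vec a) (perp (X J2)) (unit_vec c))"
    "?a (Uc J1) * ?a (Uc J2) + det2 (Dmat J3 ?a) =
       U J1 * U J2 + det2 (\<lambda>a b. tri P (unit_vec a) (unit_vec b) (perp (X J3)))"
    by (simp_all add: coord_defs algebra_simps)
  ultimately show ?thesis
    unfolding H_eqs_def H_sys_def lin_eqs_def quad_eqs_def by simp
qed

lemma H_eqs_iff: "H_eqs a \<longleftrightarrow> H_sys (u_of a) (x_of a) (p_of a)"
  using H_eqs_point[of "u_of a" "x_of a" "p_of a" "a Vc"] by (simp add: point_coords)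

lemma zariski_closed_coneH: "zariski_closed coneH"
proof -
  define F :: "(pt \<Rightarrow> complex) set" where
    "F = (\<Union>r\<in>{I1, I2}. {\<lambda>a. - a (Uc J1) * xvec a J1 r + mv (Dmat J3 a) (xvec a J2) r,
                \<lambda>a. - a (Uc J2) * xvec a J2 r + mv (Dmat J1 a) (xvec a J3) r,
                \<lambda>a. - a (Uc J3) * xvec a J3 r - mv (adj2 (Dmat J2 a)) (xvec a J1) r})
       \<union> {\<lambda>a. a (Uc J2) * a (Uc J3) + det2 (Dmat J1 a), \<lambda>a. a (Uc J3) * a (Uc J1) + det2 (Dmat J2 a),
          \<lambda>a. a (Uc J1) * a (Uc J2) + det2 (Dmat J3 a)}"
  have "F \<subseteq> polyfun"
    unfolding F_def by (auto simp: coord_defs intro!: polyfun_intros)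
  moreover have "coneH = {a. \<forall>f\<in>F. f a = 0}"
    unfolding coneH_def H_eqs_def F_def all_idx2 by auto
  ultimately show ?thesis unfolding zariski_closed_iff by blast
qed

section \<open>Linear algebra of 2 x 2 x 2 tensors\<close>

lemma tri_expand1: "tri P w y z = w I1 * tri P (unit_vec I1) y z + w I2 * tri P (unit_vec I2) y z"
  by (simp add: tri_def unit_vec_def algebra_simps)

lemma tri_expand2: "tri P y w z = w I1 * tri P y (unit_vec I1) z + w I2 * tri P y (unit_vec I2) z"
  by (simp add: tri_def unit_vec_def algebra_simps)

lemma tri_expand3: "tri P y z w = w I1 * tri P y z (unit_vec I1) + w I2 * tri P y z (unit_vec I2)"
  by (simp add: tri_def unit_vec_def algebra_simps)

lemma tri_uminus1: "tri P (\<lambda>i. - w i) y z = - tri P w y z"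
  by (simp add: tri_def algebra_simps)

lemma tri_uminus2: "tri P y (\<lambda>i. - w i) z = - tri P y w z"
  by (simp add: tri_def algebra_simps)

lemma tri_uminus3: "tri P y z (\<lambda>i. - w i) = - tri P y z w"
  by (simp add: tri_def algebra_simps)

lemma tri_add_tensor: "tri (\<lambda>a b c. P a b c + Q a b c) x y z = tri P x y z + tri Q x y z"
  by (simp add: tri_def algebra_simps)

lemma tri_scale_tensor: "tri (\<lambda>a b c. t * Q a b c) x y z = t * tri Q x y z"
  by (simp add: tri_def algebra_simps)

lemma tri_rank_one:
  "tri (\<lambda>a b c. unit_vec p a * unit_vec q b * unit_vec r c) x y z = x p * y q * z r"
  "tri (\<lambda>a b c. unit_vec p a * (unit_vec q b * unit_vec r c)) x y z = x p * y q * z r"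
  by (cases p; cases q; cases r; simp add: tri_def unit_vec_def)+

lemma tri_scale1: "tri P (\<lambda>i. t * x i) y z = t * tri P x y z"
  by (simp add: tri_def algebra_simps)

lemma tri_scale2: "tri P y (\<lambda>i. t * x i) z = t * tri P y x z"
  by (simp add: tri_def algebra_simps)

lemma tri_scale3: "tri P y z (\<lambda>i. t * x i) = t * tri P y z x"
  by (simp add: tri_def algebra_simps)

lemma tri_zero:
  "tri P (\<lambda>i. 0) y z = 0" "tri P y (\<lambda>i. 0) z = 0" "tri P y z (\<lambda>i. 0) = 0"
  by (simp_all add: tri_def)

lemma perp_scale: "perp (\<lambda>i. t * y i) = (\<lambda>i. t * perp y i)"
  by (rule ext, case_tac i) (simp_all add: perp_def)

lemma perp_zero: "perp (\<lambda>i. 0) = (\<lambda>i. 0)"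
  by (rule ext, case_tac i) (simp_all add: perp_def)

lemma not_nonzero_iff: "\<not> nonzero y \<longleftrightarrow> y = (\<lambda>i. 0)"
  by (auto simp: nonzero_def fun_eq_iff all_idx2)

lemma nonzero_ex: "nonzero y \<Longrightarrow> \<exists>s. y s \<noteq> 0"
  unfolding nonzero_def by auto

lemma nonzero_perp: "nonzero y \<Longrightarrow> nonzero (perp y)"
  by (auto simp: nonzero_def perp_def)

lemma nonzero_unit_vec: "nonzero (unit_vec r)"
  by (cases r) (simp_all add: nonzero_def unit_vec_def)

lemma perp_unit_vec1_1: "perp (unit_vec I1) I1 = 0"
  by (simp add: perp_def unit_vec_def)

lemma unit_vec_sym: "unit_vec r s = unit_vec s r"
  by (auto simp: unit_vec_def)

lemmas tri_simps = tri_add_tensor tri_scale_tensor tri_rank_one tri_scale1 tri_scale2 tri_scale3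
  tri_zero perp_scale perp_zero

lemma tri_perp2: "tri P x (perp y) z = y I1 * (- tri P x (unit_vec I2) z) + y I2 * tri P x (unit_vec I1) z"
  by (subst tri_expand2) (simp add: perp_def algebra_simps)

lemma tri_perp3: "tri P x z (perp y) = y I1 * (- tri P x z (unit_vec I2)) + y I2 * tri P x z (unit_vec I1)"
  by (subst tri_expand3) (simp add: perp_def algebra_simps)

lemma parallel_if_perp_orthogonal:
  assumes "w I1 * perp x I1 + w I2 * perp x I2 = 0" and "x s \<noteq> 0"
  shows "w r = (w s / x s) * x r"
proof -
  have "w I1 * x I2 = w I2 * x I1" using assms(1) unfolding perp_def by simp
  then have "w r * x s = w s * x r"
    by (cases r; cases s) (simp_all add: algebra_simps)
  then show ?thesis using assms(2) by (simp add: field_simps)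
qed

lemma det2_transpose: "det2 (\<lambda>a b. M b a) = det2 M"
  by (simp add: det2_def algebra_simps)

lemma det2_zero_matrix: "det2 (\<lambda>a b. 0) = 0"
  by (simp add: det2_def)

lemma det2_scale: "det2 (\<lambda>a b. t * M a b) = t * t * det2 M"
  by (simp add: det2_def algebra_simps)

lemma det2_add_rank_one: "det2 (\<lambda>a b. M a b + s * (unit_vec i a * unit_vec j b)) = det2 M + s * adj2 M j i"
  by (cases i; cases j) (simp_all add: det2_def adj2_def unit_vec_def algebra_simps)

lemma adj2_nonzero:
  assumes "M a b \<noteq> 0" shows "\<exists>i j. adj2 M j i \<noteq> 0"
proof -
  have "adj2 M I1 I1 = M I2 I2" "adj2 M I1 I2 = - M I1 I2" "adj2 M I2 I1 = - M I2 I1" "adj2 M I2 I2 = M I1 I1"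
    by (simp_all add: adj2_def)
  then show ?thesis using assms by (cases a; cases b) (metis neg_equal_0_iff_equal)+
qed

lemma det2_eq_0_imp_kernel:
  assumes "det2 M = 0"
  shows "\<exists>w. nonzero w \<and> (\<forall>r. M r I1 * w I1 + M r I2 * w I2 = 0)"
proof (cases "M I1 I1 \<noteq> 0 \<or> M I1 I2 \<noteq> 0")
  case True
  let ?w = "\<lambda>i. case i of I1 \<Rightarrow> - M I1 I2 | I2 \<Rightarrow> M I1 I1"
  have "nonzero ?w" using True by (auto simp: nonzero_def)
  moreover have "\<forall>r. M r I1 * ?w I1 + M r I2 * ?w I2 = 0"
    using assms by (auto simp: all_idx2 det2_def algebra_simps)
  ultimately show ?thesis by blast
next
  case False
  show ?thesis
  proof (cases "M I2 I1 \<noteq> 0 \<or> M I2 I2 \<noteq> 0")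
    case True
    let ?w = "\<lambda>i. case i of I1 \<Rightarrow> - M I2 I2 | I2 \<Rightarrow> M I2 I1"
    have "nonzero ?w" using True by (auto simp: nonzero_def)
    moreover have "\<forall>r. M r I1 * ?w I1 + M r I2 * ?w I2 = 0"
      using False by (auto simp: all_idx2 algebra_simps)
    ultimately show ?thesis by blast
  next
    case False2: False
    have "nonzero (unit_vec I1)" by (rule nonzero_unit_vec)
    moreover have "\<forall>r. M r I1 * unit_vec I1 I1 + M r I2 * unit_vec I1 I2 = 0"
      using False False2 by (auto simp: all_idx2 unit_vec_def)
    ultimately show ?thesis by blast
  qed
qed

lemma det2_eq_0_imp_perp_kernel:
  assumes "det2 M = 0"
  obtains y where "nonzero y" "\<And>r. M r I1 * perp y I1 + M r I2 * perp y I2 = 0"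
proof -
  obtain w where w: "nonzero w" "\<forall>r. M r I1 * w I1 + M r I2 * w I2 = 0"
    using det2_eq_0_imp_kernel[OF assms] by blast
  define y where "y = (\<lambda>i. case i of I1 \<Rightarrow> - w I2 | I2 \<Rightarrow> w I1)"
  have "perp y = w" by (rule ext, rename_tac i, case_tac i) (simp_all add: y_def perp_def)
  moreover have "nonzero y" using w(1) by (auto simp: nonzero_def y_def)
  ultimately show ?thesis using that w(2) by blast
qed

lemma kernel_imp_det2_eq_0:
  assumes "\<And>r. M r I1 * w I1 + M r I2 * w I2 = 0" "nonzero w"
  shows "det2 M = 0"
proof -
  have "det2 M * w I1 = M I2 I2 * (M I1 I1 * w I1 + M I1 I2 * w I2) - M I1 I2 * (M I2 I1 * w I1 + M I2 I2 * w I2)"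
    by (simp add: det2_def algebra_simps)
  then have 1: "det2 M * w I1 = 0" using assms(1) by simp
  have "det2 M * w I2 = M I1 I1 * (M I2 I1 * w I1 + M I2 I2 * w I2) - M I2 I1 * (M I1 I1 * w I1 + M I1 I2 * w I2)"
    by (simp add: det2_def algebra_simps)
  then have 2: "det2 M * w I2 = 0" using assms(1) by simp
  show ?thesis using 1 2 assms(2) unfolding nonzero_def by auto
qed

lemma pencil_singular_member: "\<exists>y. nonzero y \<and> det2 (\<lambda>a c. y I1 * A a c + y I2 * B a c) = 0"
proof (cases "det2 A = 0")
  case True
  have "nonzero (unit_vec I1)" by (rule nonzero_unit_vec)
  moreover have "det2 (\<lambda>a c. unit_vec I1 I1 * A a c + unit_vec I1 I2 * B a c) = 0"
    using True by (simp add: unit_vec_def)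
  ultimately show ?thesis by blast
next
  case False
  define \<alpha> where "\<alpha> = det2 A"
  define \<beta> where "\<beta> = A I1 I1 * B I2 I2 + A I2 I2 * B I1 I1 - A I1 I2 * B I2 I1 - A I2 I1 * B I1 I2"
  define \<gamma> where "\<gamma> = det2 B"
  define s where "s = csqrt (\<beta>^2 - 4 * \<alpha> * \<gamma>)"
  have s2: "s^2 = \<beta>^2 - 4 * \<alpha> * \<gamma>" unfolding s_def by (rule power2_csqrt)
  have a0: "\<alpha> \<noteq> 0" using False unfolding \<alpha>_def by simp
  define z where "z = (s - \<beta>) / (2 * \<alpha>)"
  have zz: "2 * \<alpha> * z + \<beta> = s" unfolding z_def using a0 by (simp add: field_simps)
  have "4 * \<alpha> * (\<alpha> * z^2 + \<beta> * z + \<gamma>) = (2 * \<alpha> * z + \<beta>)^2 - (\<beta>^2 - 4 * \<alpha> * \<gamma>)"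
    by (simp add: power2_eq_square algebra_simps)
  also have "\<dots> = 0" using zz s2 by simp
  finally have q: "\<alpha> * z^2 + \<beta> * z + \<gamma> = 0" using a0 by simp
  let ?y = "\<lambda>i. case i of I1 \<Rightarrow> z | I2 \<Rightarrow> (1::complex)"
  have "nonzero ?y" by (simp add: nonzero_def)
  moreover have "det2 (\<lambda>a c. ?y I1 * A a c + ?y I2 * B a c) = \<alpha> * z^2 + \<beta> * z + \<gamma>"
    unfolding \<alpha>_def \<beta>_def \<gamma>_def by (simp add: det2_def power2_eq_square algebra_simps)
  ultimately show ?thesis using q by metis
qed

lemma singular_slice2: "\<exists>y. nonzero y \<and> det2 (\<lambda>a c. tri P (unit_vec a) (perp y) (unit_vec c)) = 0"
  using pencil_singular_member[of "\<lambda>a c. - tri P (unit_vec a) (unit_vec I2) (unit_vec c)"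
      "\<lambda>a c. tri P (unit_vec a) (unit_vec I1) (unit_vec c)"]
  by (simp add: tri_perp2)

lemma singular_slice3: "\<exists>y. nonzero y \<and> det2 (\<lambda>a b. tri P (unit_vec a) (unit_vec b) (perp y)) = 0"
  using pencil_singular_member[of "\<lambda>a c. - tri P (unit_vec a) (unit_vec c) (unit_vec I2)"
      "\<lambda>a c. tri P (unit_vec a) (unit_vec c) (unit_vec I1)"]
  by (simp add: tri_perp3)

section \<open>The open stratum and its parametrization\<close>

lemma lin_eqsD:
  assumes "lin_eqs U X P"
  shows "tri P (unit_vec r) (perp (X J2)) (perp (X J3)) = U J1 * X J1 r"
    "tri P (perp (X J1)) (unit_vec r) (perp (X J3)) = U J2 * X J2 r"
    "tri P (perp (X J1)) (perp (X J2)) (unit_vec r) = U J3 * X J3 r"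
  using assms unfolding lin_eqs_def by auto

lemma quad_eqsD:
  assumes "quad_eqs U X P"
  shows "U J2 * U J3 + det2 (\<lambda>b c. tri P (perp (X J1)) (unit_vec b) (unit_vec c)) = 0"
    "U J3 * U J1 + det2 (\<lambda>a c. tri P (unit_vec a) (perp (X J2)) (unit_vec c)) = 0"
    "U J1 * U J2 + det2 (\<lambda>a b. tri P (unit_vec a) (unit_vec b) (perp (X J3))) = 0"
  using assms unfolding quad_eqs_def by auto

lemma lin_eqs_perp_perp_perp:
  assumes "lin_eqs U X P"
  shows "tri P (perp (X J1)) (perp (X J2)) (perp (X J3)) = 0"
proof -
  have "tri P (perp (X J1)) (perp (X J2)) (perp (X J3)) =
     perp (X J1) I1 * (U J1 * X J1 I1) + perp (X J1) I2 * (U J1 * X J1 I2)"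
    by (subst tri_expand1) (simp add: lin_eqsD[OF assms])
  also have "\<dots> = 0" by (simp add: perp_def algebra_simps)
  finally show ?thesis .
qed

lemma quad_identity1:
  "tri P y (unit_vec s) (perp x3) * tri P y (perp x2) (unit_vec t)
     - tri P y (perp x2) (perp x3) * tri P y (unit_vec s) (unit_vec t)
   = - det2 (\<lambda>b c. tri P y (unit_vec b) (unit_vec c)) * x2 s * x3 t"
  by (cases s; cases t) (simp_all add: coord_defs algebra_simps)

lemma quad_identity2:
  "tri P (unit_vec s) y (perp x3) * tri P (perp x1) y (unit_vec t)
     - tri P (perp x1) y (perp x3) * tri P (unit_vec s) y (unit_vec t)
   = - det2 (\<lambda>a c. tri P (unit_vec a) y (unit_vec c)) * x1 s * x3 t"
  by (cases s; cases t) (simp_all add: coord_defs algebra_simps)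

lemma quad_identity3:
  "tri P (unit_vec s) (perp x2) y * tri P (perp x1) (unit_vec t) y
     - tri P (perp x1) (perp x2) y * tri P (unit_vec s) (unit_vec t) y
   = - det2 (\<lambda>a b. tri P (unit_vec a) (unit_vec b) y) * x1 s * x2 t"
  by (cases s; cases t) (simp_all add: coord_defs algebra_simps)

text \<open>Multiplied by x_2 s * x_3 t, the first quadric is the minor of quad_identity1 whose entries
  the linear equations turn into u_2 x_2 s, u_3 x_3 t and 0; similarly for the others.\<close>
lemma lin_eqs_imp_quad_eqs:
  assumes L: "lin_eqs U X P" and "nonzero (X J1)" "nonzero (X J2)" "nonzero (X J3)"
  shows "quad_eqs U X P"
proof -
  obtain s1 s2 s3 where s: "X J1 s1 \<noteq> 0" "X J2 s2 \<noteq> 0" "X J3 s3 \<noteq> 0"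
    using assms(2-4) nonzero_ex by metis
  note D = lin_eqsD[OF L] and q = lin_eqs_perp_perp_perp[OF L]
  have "(U J2 * U J3 + det2 (\<lambda>b c. tri P (perp (X J1)) (unit_vec b) (unit_vec c))) * X J2 s2 * X J3 s3 = 0"
    using quad_identity1[of P "perp (X J1)" s2 "X J3" "X J2" s3, unfolded D q]
    by (simp add: algebra_simps)
  moreover have "(U J3 * U J1 + det2 (\<lambda>a c. tri P (unit_vec a) (perp (X J2)) (unit_vec c))) * X J1 s1 * X J3 s3 = 0"
    using quad_identity2[of P s1 "perp (X J2)" "X J3" "X J1" s3, unfolded D q]
    by (simp add: algebra_simps)
  moreover have "(U J1 * U J2 + det2 (\<lambda>a b. tri P (unit_vec a) (unit_vec b) (perp (X J3)))) * X J1 s1 * X J2 s2 = 0"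
    using quad_identity3[of P s1 "X J2" "perp (X J3)" "X J1" s2, unfolded D q]
    by (simp add: algebra_simps)
  ultimately show ?thesis unfolding quad_eqs_def using s by simp
qed

definition stratum :: "bool \<Rightarrow> bool \<Rightarrow> bool \<Rightarrow> pt set" where
  "stratum b1 b2 b3 = {a. H_eqs a \<and> nonzero (x_of a J1) = b1 \<and> nonzero (x_of a J2) = b2
                                 \<and> nonzero (x_of a J3) = b3}"

lemma point_in_stratum [simp]:
  "point U X P v \<in> stratum b1 b2 b3 \<longleftrightarrow>
     H_sys U X P \<and> nonzero (X J1) = b1 \<and> nonzero (X J2) = b2 \<and> nonzero (X J3) = b3"
  by (simp add: stratum_def H_eqs_point)

lemma stratum_subsetI:
  assumes "\<And>U X P v. H_sys U X P \<Longrightarrow> nonzero (X J1) = b1 \<Longrightarrow> nonzero (X J2) = b2 \<Longrightarrow>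
      nonzero (X J3) = b3 \<Longrightarrow> point U X P v \<in> T"
  shows "stratum b1 b2 b3 \<subseteq> T"
proof
  fix a assume "a \<in> stratum b1 b2 b3"
  then have "point (u_of a) (x_of a) (p_of a) (a Vc) \<in> T"
    by (intro assms) (auto simp: stratum_def H_eqs_iff)
  then show "a \<in> T" by (simp add: point_coords)
qed

definition generic_x21 :: "pt set" where
  "generic_x21 = stratum True True True \<inter> {a. a (Xc I2 J1) = 0}"

lemma lin_eqs_in_generic_x21:
  assumes "lin_eqs U X P" "nonzero (X J1)" "nonzero (X J2)" "nonzero (X J3)" "X J1 I2 = 0"
  shows "point U X P v \<in> generic_x21"
  using assms lin_eqs_imp_quad_eqs[OF assms(1-4)] unfolding generic_x21_def by (simp add: H_sys_def)

datatype param_var = Gp idx3 idx2 idx2 | Qp idx2 idx2 idx2 | Vp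

definition det_G :: "(param_var \<Rightarrow> complex) \<Rightarrow> idx3 \<Rightarrow> complex" where
  "det_G z j = z (Gp j I1 I1) * z (Gp j I2 I2) - z (Gp j I1 I2) * z (Gp j I2 I1)"

definition tensor_Q :: "(param_var \<Rightarrow> complex) \<Rightarrow> idx2 \<Rightarrow> idx2 \<Rightarrow> idx2 \<Rightarrow> complex" where
  "tensor_Q z a b c = (if a = I2 \<and> b = I2 \<and> c = I2 then 0 else z (Qp a b c))"

text \<open>At x_1 = x_2 = x_3 = e_1 the linear equations say exactly that p_222 = 0 and
  u = (p_122, p_212, p_221).  The parametrization moves this normal form by
  (G_1, G_2, G_3) in GL_2^3: x_j = G_j e_1, p = (G_1, G_2, G_3) Q, u_1 = det G_2 det G_3 Q_122.\<close>
definition param :: "(param_var \<Rightarrow> complex) \<Rightarrow> pt" where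
  "param z = point
     (\<lambda>k. case k of J1 \<Rightarrow> det_G z J2 * det_G z J3 * tensor_Q z I1 I2 I2
                  | J2 \<Rightarrow> det_G z J1 * det_G z J3 * tensor_Q z I2 I1 I2
                  | J3 \<Rightarrow> det_G z J1 * det_G z J2 * tensor_Q z I2 I2 I1)
     (\<lambda>j i. z (Gp j i I1))
     (\<lambda>a b c. tri (tensor_Q z) (z \<circ> Gp J1 a) (z \<circ> Gp J2 b) (z \<circ> Gp J3 c))
     (z Vp)"

lemma H_eqs_param: "H_eqs (param z)"
proof -
  have "lin_eqs (u_of (param z)) (x_of (param z)) (p_of (param z))"
    unfolding lin_eqs_def param_def coords_point all_idx2
    by (simp add: coord_defs tensor_Q_def det_G_def algebra_simps)
  moreover have "quad_eqs (u_of (param z)) (x_of (param z)) (p_of (param z))"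
    unfolding quad_eqs_def param_def coords_point
    by (simp add: coord_defs tensor_Q_def det_G_def algebra_simps)
  ultimately show ?thesis by (simp add: H_eqs_iff H_sys_def)
qed

lemma polyfun_param: "(\<lambda>z. param z w) \<in> polyfun"
proof (cases w)
  case (Uc k)
  then show ?thesis
    by (cases k) (simp_all add: param_def det_G_def tensor_Q_def, (intro polyfun_intros)+)
next
  case (Pc a b c)
  then show ?thesis
    by (simp add: param_def tri_def tensor_Q_def, (intro polyfun_intros)+)
qed (simp_all add: param_def polyfun.intros)

definition compl_vec :: "(idx2 \<Rightarrow> complex) \<Rightarrow> idx2 \<Rightarrow> complex" where
  "compl_vec y = (if y I1 \<noteq> 0 then (\<lambda>i. if i = I1 then 0 else 1 / y I1)
                  else (\<lambda>i. if i = I1 then - 1 / y I2 else 0))"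

lemma compl_vec_det: "nonzero y \<Longrightarrow> y I1 * compl_vec y I2 - y I2 * compl_vec y I1 = 1"
  unfolding nonzero_def compl_vec_def by auto

definition frame :: "(idx2 \<Rightarrow> complex) \<Rightarrow> idx2 \<Rightarrow> idx2 \<Rightarrow> complex" where
  "frame x i c = (if c = I1 then x i else compl_vec x i)"

lemma adj2_frame2: "adj2 (frame x) I2 = (\<lambda>i. - perp x i)"
  by (rule ext, case_tac i) (simp_all add: adj2_def frame_def perp_def)

lemma adj2_frame1_dot:
  "nonzero x \<Longrightarrow> adj2 (frame x) I1 I1 * x I1 + adj2 (frame x) I1 I2 * x I2 = 1"
  using compl_vec_det[of x] by (simp add: adj2_def frame_def algebra_simps)

lemma det_frame: "nonzero x \<Longrightarrow> det2 (frame x) = 1"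
  using compl_vec_det[of x] by (simp add: frame_def det2_def algebra_simps)

lemma tri_adj2_rows:
  "tri (\<lambda>a b c. tri P (adj2 g1 a) (adj2 g2 b) (adj2 g3 c)) (g1 a) (g2 b) (g3 c)
    = det2 g1 * det2 g2 * det2 g3 * P a b c"
  by (cases a; cases b; cases c) (simp_all add: coord_defs algebra_simps)

text \<open>On the generic stratum param is inverted by taking G_j of determinant 1 with first
  column x_j and pulling p back along it.\<close>
definition param_inv ::
  "(idx3 \<Rightarrow> idx2 \<Rightarrow> complex) \<Rightarrow> (idx2 \<Rightarrow> idx2 \<Rightarrow> idx2 \<Rightarrow> complex) \<Rightarrow> complex \<Rightarrow> param_var \<Rightarrow> complex"
where
  "param_inv X P v w = (case w of
        Gp j i c \<Rightarrow> frame (X j) i c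
      | Qp a b c \<Rightarrow> tri P (adj2 (frame (X J1)) a) (adj2 (frame (X J2)) b) (adj2 (frame (X J3)) c)
      | Vp \<Rightarrow> v)"

lemma tensor_Q_param_inv:
  assumes "lin_eqs U X P"
  shows "tensor_Q (param_inv X P v) =
    (\<lambda>a b c. tri P (adj2 (frame (X J1)) a) (adj2 (frame (X J2)) b) (adj2 (frame (X J3)) c))"
proof (intro ext)
  fix a b c
  show "tensor_Q (param_inv X P v) a b c =
      tri P (adj2 (frame (X J1)) a) (adj2 (frame (X J2)) b) (adj2 (frame (X J3)) c)"
  proof (cases "a = I2 \<and> b = I2 \<and> c = I2")
    case True
    then show ?thesis using lin_eqs_perp_perp_perp[OF assms]
      by (simp add: tensor_Q_def adj2_frame2 tri_uminus1 tri_uminus2 tri_uminus3)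
  qed (auto simp: tensor_Q_def param_inv_def)
qed

lemma param_param_inv:
  assumes L: "lin_eqs U X P" and n: "nonzero (X J1)" "nonzero (X J2)" "nonzero (X J3)"
  shows "param (param_inv X P v) = point U X P v"
proof (rule ext)
  fix w
  note Q = tensor_Q_param_inv[OF L] and D = lin_eqsD[OF L]
  have det_G: "det_G (param_inv X P v) j = 1" if "nonzero (X j)" for j
    using det_frame[OF that] by (simp add: det_G_def det2_def param_inv_def)
  have "tri P (adj2 (frame (X J1)) I1) (perp (X J2)) (perp (X J3)) = U J1"
    "tri P (perp (X J1)) (adj2 (frame (X J2)) I1) (perp (X J3)) = U J2"
    "tri P (perp (X J1)) (perp (X J2)) (adj2 (frame (X J3)) I1) = U J3"
    using adj2_frame1_dot[OF n(1)] adj2_frame1_dot[OF n(2)] adj2_frame1_dot[OF n(3)]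
    by (simp_all add: tri_expand1[of P "adj2 _ _"] tri_expand2[of P _ "adj2 _ _"]
        tri_expand3[of P _ _ "adj2 _ _"] D algebra_simps flip: distrib_left)
  then have "u_of (param (param_inv X P v)) = U"
    using det_G n by (auto simp: param_def Q adj2_frame2 tri_uminus1 tri_uminus2 tri_uminus3
        split: idx3.split)
  moreover have "x_of (param (param_inv X P v)) = X"
    by (auto simp: param_def param_inv_def frame_def fun_eq_iff)
  moreover have "p_of (param (param_inv X P v)) = P"
    using tri_adj2_rows[of P "frame (X J1)" "frame (X J2)" "frame (X J3)"] det_frame[OF n(1)]
      det_frame[OF n(2)] det_frame[OF n(3)]
    by (auto simp: param_def Q comp_def param_inv_def fun_eq_iff)
  moreover have "param (param_inv X P v) Vc = v"
    by (simp add: param_def param_inv_def)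
  ultimately show "param (param_inv X P v) w = point U X P v w"
    by (metis point_coords)
qed

lemma generic_subset_range_param: "stratum True True True \<subseteq> range param"
proof
  fix a assume "a \<in> stratum True True True"
  then have "lin_eqs (u_of a) (x_of a) (p_of a)" "nonzero (x_of a J1)" "nonzero (x_of a J2)" "nonzero (x_of a J3)"
    unfolding stratum_def H_eqs_iff H_sys_def by auto
  then have "param (param_inv (x_of a) (p_of a) (a Vc)) = a"
    by (simp add: param_param_inv point_coords)
  then show "a \<in> range param" by (metis rangeI)
qed

definition param_x21 :: "(param_var \<Rightarrow> complex) \<Rightarrow> pt" where
  "param_x21 z = param (z(Gp J1 I2 I1 := 0))"

lemma polyfun_param_x21: "(\<lambda>z. param_x21 z w) \<in> polyfun"
  unfolding param_x21_def by (rule polyfun_compose[OF polyfun_param polyfun_fun_upd])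

lemma param_x21_x21: "param_x21 z (Xc I2 J1) = 0"
  by (simp add: param_x21_def param_def)

lemma generic_x21_subset_range_param_x21: "generic_x21 \<subseteq> range param_x21"
proof
  fix a assume "a \<in> generic_x21"
  then have "a \<in> stratum True True True" and x21: "a (Xc I2 J1) = 0"
    unfolding generic_x21_def by auto
  then obtain z where "a = param z" using generic_subset_range_param by blast
  moreover have "z(Gp J1 I2 I1 := 0) = z"
    using x21 \<open>a = param z\<close> by (auto simp: param_def)
  ultimately have "a = param_x21 z" by (simp add: param_x21_def)
  then show "a \<in> range param_x21" by blast
qed

section \<open>Symmetries\<close>

definition swap23 :: "idx3 \<Rightarrow> idx3" where
  "swap23 j = (case j of J1 \<Rightarrow> J1 | J2 \<Rightarrow> J3 | J3 \<Rightarrow> J2)"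

lemma swap23_simps [simp]: "swap23 J1 = J1" "swap23 J2 = J3" "swap23 J3 = J2"
  by (simp_all add: swap23_def)

definition tensor_swap23 :: "(idx2 \<Rightarrow> idx2 \<Rightarrow> idx2 \<Rightarrow> complex) \<Rightarrow> idx2 \<Rightarrow> idx2 \<Rightarrow> idx2 \<Rightarrow> complex" where
  "tensor_swap23 P a b c = P a c b"

lemma tensor_swap23_involution [simp]: "tensor_swap23 (tensor_swap23 P) = P"
  by (simp add: tensor_swap23_def fun_eq_iff)

lemma tri_tensor_swap23: "tri (tensor_swap23 P) x y z = tri P x z y"
  by (simp add: tri_def tensor_swap23_def algebra_simps)

lemma H_sys_swap23:
  assumes "H_sys U X P"
  shows "H_sys (U \<circ> swap23) (X \<circ> swap23) (tensor_swap23 P)"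
proof -
  have L: "lin_eqs U X P" and Q: "quad_eqs U X P" using assms unfolding H_sys_def by simp_all
  have "lin_eqs (U \<circ> swap23) (X \<circ> swap23) (tensor_swap23 P)"
    using lin_eqsD[OF L] unfolding lin_eqs_def by (simp add: tri_tensor_swap23)
  moreover have "quad_eqs (U \<circ> swap23) (X \<circ> swap23) (tensor_swap23 P)"
    using quad_eqsD[OF Q] det2_transpose[of "\<lambda>b c. tri P (perp (X J1)) (unit_vec b) (unit_vec c)"]
    unfolding quad_eqs_def by (simp add: tri_tensor_swap23 mult.commute)
  ultimately show ?thesis unfolding H_sys_def by simp
qed

definition swap23_pt :: "pt \<Rightarrow> pt" where
  "swap23_pt a = point (u_of a \<circ> swap23) (x_of a \<circ> swap23) (tensor_swap23 (p_of a)) (a Vc)"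

lemma swap23_pt_point: "swap23_pt (point U X P v) = point (U \<circ> swap23) (X \<circ> swap23) (tensor_swap23 P) v"
  by (simp add: swap23_pt_def)

lemma swap23_pt_involution: "swap23_pt (swap23_pt a) = a"
proof -
  have "swap23 (swap23 j) = j" for j by (cases j) simp_all
  then show ?thesis
    by (simp add: swap23_pt_def comp_def point_coords)
qed

lemma polyfun_swap23_pt: "(\<lambda>x. swap23_pt x w) \<in> polyfun"
  by (cases w) (simp_all add: swap23_pt_def u_of_def x_of_def p_of_def tensor_swap23_def polyfun.intros)

lemma swap23_pt_generic_x21: "swap23_pt ` generic_x21 \<subseteq> generic_x21"
proof clarify
  fix a assume "a \<in> generic_x21"
  then have "H_sys (u_of a) (x_of a) (p_of a)" "nonzero (x_of a J1)" "nonzero (x_of a J2)"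
    "nonzero (x_of a J3)" "x_of a J1 I2 = 0"
    unfolding generic_x21_def stratum_def by (auto simp: H_eqs_iff x_of_def)
  then show "swap23_pt a \<in> generic_x21"
    unfolding swap23_pt_def generic_x21_def by (simp add: H_sys_swap23)
qed

definition cycle :: "idx3 \<Rightarrow> idx3" where
  "cycle j = (case j of J1 \<Rightarrow> J3 | J2 \<Rightarrow> J1 | J3 \<Rightarrow> J2)"

lemma cycle_simps [simp]: "cycle J1 = J3" "cycle J2 = J1" "cycle J3 = J2"
  by (simp_all add: cycle_def)

definition tensor_cycle :: "(idx2 \<Rightarrow> idx2 \<Rightarrow> idx2 \<Rightarrow> complex) \<Rightarrow> idx2 \<Rightarrow> idx2 \<Rightarrow> idx2 \<Rightarrow> complex" where
  "tensor_cycle P a b c = P b c a"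

lemma tensor_cycle_order3 [simp]: "tensor_cycle (tensor_cycle (tensor_cycle P)) = P"
  by (simp add: tensor_cycle_def fun_eq_iff)

lemma tri_tensor_cycle: "tri (tensor_cycle P) x y z = tri P y z x"
  by (simp add: tri_def tensor_cycle_def algebra_simps)

lemma H_sys_cycle:
  assumes "H_sys U X P"
  shows "H_sys (U \<circ> cycle) (X \<circ> cycle) (tensor_cycle P)"
proof -
  have L: "lin_eqs U X P" and Q: "quad_eqs U X P" using assms unfolding H_sys_def by simp_all
  have "lin_eqs (U \<circ> cycle) (X \<circ> cycle) (tensor_cycle P)"
    using lin_eqsD[OF L] unfolding lin_eqs_def by (simp add: tri_tensor_cycle)
  moreover have "quad_eqs (U \<circ> cycle) (X \<circ> cycle) (tensor_cycle P)"
    using quad_eqsD[OF Q] det2_transpose[of "\<lambda>b c. tri P (perp (X J1)) (unit_vec b) (unit_vec c)"]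
      det2_transpose[of "\<lambda>a c. tri P (unit_vec a) (perp (X J2)) (unit_vec c)"]
    unfolding quad_eqs_def by (simp add: tri_tensor_cycle)
  ultimately show ?thesis unfolding H_sys_def by simp
qed

definition cycle_pt :: "pt \<Rightarrow> pt" where
  "cycle_pt a = point (u_of a \<circ> cycle) (x_of a \<circ> cycle) (tensor_cycle (p_of a)) (a Vc)"

lemma cycle_pt_order3: "cycle_pt (cycle_pt (cycle_pt a)) = a"
proof -
  have "cycle (cycle (cycle j)) = j" for j by (cases j) simp_all
  then show ?thesis
    by (simp add: cycle_pt_def comp_def point_coords)
qed

lemma polyfun_cycle_pt: "(\<lambda>x. cycle_pt x w) \<in> polyfun"
  by (cases w) (simp_all add: cycle_pt_def u_of_def x_of_def p_of_def tensor_cycle_def polyfun.intros)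

lemma cycle_pt_generic: "cycle_pt ` stratum True True True \<subseteq> stratum True True True"
proof clarify
  fix a assume "a \<in> stratum True True True"
  then have "H_sys (u_of a) (x_of a) (p_of a)" "nonzero (x_of a J1)" "nonzero (x_of a J2)"
    "nonzero (x_of a J3)"
    unfolding stratum_def by (auto simp: H_eqs_iff)
  then show "cycle_pt a \<in> stratum True True True"
    unfolding cycle_pt_def by (simp add: H_sys_cycle)
qed

section \<open>Degenerations of the locus x_1 = 0\<close>

lemma point_in_zclosure_curve:
  assumes "\<And>k. univ_poly (\<lambda>t. U t k)" "\<And>j i. univ_poly (\<lambda>t. X t j i)"
    "\<And>a b c. univ_poly (\<lambda>t. P t a b c)"
    and "\<And>t. t \<noteq> 0 \<Longrightarrow> point (U t) (X t) (P t) v \<in> S"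
  shows "point (U 0) (X 0) (P 0) v \<in> zclosure S"
proof (rule zclosure_curve_limit[of "\<lambda>t. point (U t) (X t) (P t) v"])
  show "univ_poly (\<lambda>t. point (U t) (X t) (P t) v w)" for w
    using assms(1-3) by (cases w) (auto intro: univ_poly_intros)
qed (rule assms(4))

lemma lin_eqs_x1_zero:
  assumes "lin_eqs U X P" and "X J1 = (\<lambda>i. 0)"
  shows "nonzero (X J2) \<Longrightarrow> U J2 = 0" "nonzero (X J3) \<Longrightarrow> U J3 = 0"
proof -
  have "U J2 * X J2 r = 0" "U J3 * X J3 r = 0" for r
    using lin_eqsD(2,3)[OF assms(1), of r] assms(2) by (simp_all add: perp_zero tri_zero)
  then show "nonzero (X J2) \<Longrightarrow> U J2 = 0" "nonzero (X J3) \<Longrightarrow> U J3 = 0"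
    by (auto simp: nonzero_def)
qed

text \<open>Along the curve x_1 = t e_1 the tensor is corrected by a multiple of e_1 (x) e_p2 (x) e_p3
  so that the first linear equation keeps u_1; the other two then force u_2, u_3 to grow
  linearly in t.\<close>
lemma x1_zero_in_zclosure:
  assumes H: "H_sys U X P" and x1: "X J1 = (\<lambda>i. 0)" and n2: "nonzero (X J2)" and n3: "nonzero (X J3)"
  shows "point U X P v \<in> zclosure generic_x21"
proof -
  have L: "lin_eqs U X P" using H unfolding H_sys_def by simp
  note D = lin_eqsD[OF L]
  have u23: "U J2 = 0" "U J3 = 0" using lin_eqs_x1_zero[OF L x1] n2 n3 by auto
  have t0: "tri P (unit_vec r) (perp (X J2)) (perp (X J3)) = 0" for r using D(1)[of r] x1 by simp
  obtain s2 s3 where s: "X J2 s2 \<noteq> 0" "X J3 s3 \<noteq> 0" using n2 n3 nonzero_ex by metis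
  obtain p2 p3 where p: "perp (X J2) p2 \<noteq> 0" "perp (X J3) p3 \<noteq> 0"
    using n2 n3 nonzero_perp nonzero_ex by metis
  define c0 where "c0 = U J1 / (perp (X J2) p2 * perp (X J3) p3)"
  have c0: "c0 * (perp (X J2) p2 * perp (X J3) p3) = U J1" using p unfolding c0_def by simp
  define V2 where "V2 r = tri P (perp (unit_vec I1)) (unit_vec r) (perp (X J3))" for r
  define V3 where "V3 r = tri P (perp (unit_vec I1)) (perp (X J2)) (unit_vec r)" for r
  have q0: "tri P (perp (unit_vec I1)) (perp (X J2)) (perp (X J3)) = 0"
    by (subst tri_expand1) (simp add: t0)
  have "V2 I1 * perp (X J2) I1 + V2 I2 * perp (X J2) I2 = 0"
    using tri_expand2[of P "perp (unit_vec I1)" "perp (X J2)" "perp (X J3)"] q0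
    by (simp add: V2_def algebra_simps)
  then obtain k2 where V2: "V2 r = k2 * X J2 r" for r
    using parallel_if_perp_orthogonal[of V2 "X J2" s2] s(1) by blast
  have "V3 I1 * perp (X J3) I1 + V3 I2 * perp (X J3) I2 = 0"
    using tri_expand3[of P "perp (unit_vec I1)" "perp (X J2)" "perp (X J3)"] q0
    by (simp add: V3_def algebra_simps)
  then obtain k3 where V3: "V3 r = k3 * X J3 r" for r
    using parallel_if_perp_orthogonal[of V3 "X J3" s3] s(2) by blast
  define U' where "U' t = U(J2 := t * k2, J3 := t * k3)" for t
  define X' where "X' t = X(J1 := (\<lambda>i. t * unit_vec I1 i))" for t
  define P' where "P' t = (\<lambda>a b c. P a b c + t * (c0 * (unit_vec I1 a * unit_vec p2 b * unit_vec p3 c)))" for t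
  have "point (U' 0) (X' 0) (P' 0) v \<in> zclosure generic_x21"
  proof (rule point_in_zclosure_curve)
    show "univ_poly (\<lambda>t. U' t k)" "univ_poly (\<lambda>t. X' t j i)" "univ_poly (\<lambda>t. P' t a b c)" for k j i a b c
      by (auto simp: U'_def X'_def P'_def if_distribR
          intro!: univ_poly_intros)
    fix t :: complex assume t: "t \<noteq> 0"
    show "point (U' t) (X' t) (P' t) v \<in> generic_x21"
    proof (rule lin_eqs_in_generic_x21)
      show "lin_eqs (U' t) (X' t) (P' t)" unfolding lin_eqs_def
      proof (intro conjI allI)
        fix r
        show "U' t J1 * X' t J1 r = tri (P' t) (unit_vec r) (perp (X' t J2)) (perp (X' t J3))"
          using c0 by (simp add: U'_def X'_def P'_def tri_simps t0, cases r, simp_all add: unit_vec_def)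
        show "U' t J2 * X' t J2 r = tri (P' t) (perp (X' t J1)) (unit_vec r) (perp (X' t J3))"
          using V2[of r] by (simp add: U'_def X'_def P'_def tri_simps V2_def perp_unit_vec1_1 algebra_simps)
        show "U' t J3 * X' t J3 r = tri (P' t) (perp (X' t J1)) (perp (X' t J2)) (unit_vec r)"
          using V3[of r] by (simp add: U'_def X'_def P'_def tri_simps V3_def perp_unit_vec1_1 algebra_simps)
      qed
      show "nonzero (X' t J1)" "nonzero (X' t J2)" "nonzero (X' t J3)" "X' t J1 I2 = 0"
        using t n2 n3 by (simp_all add: X'_def nonzero_def unit_vec_def)
    qed
  qed
  moreover have "U' 0 = U" "X' 0 = X" "P' 0 = P"
    using u23 x1 by (auto simp: U'_def X'_def P'_def fun_eq_iff)
  ultimately show ?thesis by simp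
qed

lemma quad3_solution:
  assumes Q: "U1 * U2 + det2 (\<lambda>a b. tri P (unit_vec a) (unit_vec b) z) = 0"
    and y1: "y1 = (\<lambda>i. U2 * unit_vec I1 i)" and y2: "y2 = (\<lambda>i. - tri P (unit_vec I2) (unit_vec i) z)"
  shows "U1 * y1 r = tri P (unit_vec r) (perp y2) z" and "U2 * y2 r = tri P (perp y1) (unit_vec r) z"
proof -
  define B where "B a b = tri P (unit_vec a) (unit_vec b) z" for a b
  have "tri P (unit_vec r) (perp y2) z = perp y2 I1 * B r I1 + perp y2 I2 * B r I2"
    by (subst tri_expand2) (simp add: B_def)
  moreover have "perp y2 I1 * B I1 I1 + perp y2 I2 * B I1 I2 = - det2 B"
    by (simp add: B_def y2 perp_def det2_def algebra_simps)
  moreover have "- det2 B = U1 * U2"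
    using Q unfolding B_def by algebra
  moreover have "perp y2 I1 * B I2 I1 + perp y2 I2 * B I2 I2 = 0"
    by (simp add: B_def y2 perp_def algebra_simps)
  ultimately show "U1 * y1 r = tri P (unit_vec r) (perp y2) z"
    by (cases r) (simp_all add: y1 unit_vec_def)
  have "tri P (perp y1) (unit_vec r) z = perp y1 I1 * B I1 r + perp y1 I2 * B I2 r"
    by (subst tri_expand1) (simp add: B_def)
  then show "U2 * y2 r = tri P (perp y1) (unit_vec r) z"
    by (simp add: B_def y1 y2 perp_def unit_vec_def)
qed

text \<open>x_1 and x_2 leave 0 along u_2 e_1 and -p(e_2, -, perp x_3), which solve the first two
  linear equations because of the third quadric; u_3 = t^2 k_3 restores the third one.\<close>
lemma x12_zero_u12_nonzero_in_zclosure: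
  assumes H: "H_sys U X P" and x1: "X J1 = (\<lambda>i. 0)" and x2: "X J2 = (\<lambda>i. 0)" and n3: "nonzero (X J3)"
    and u1: "U J1 \<noteq> 0" and u2: "U J2 \<noteq> 0"
  shows "point U X P v \<in> zclosure generic_x21"
proof -
  have L: "lin_eqs U X P" and Q: "quad_eqs U X P" using H unfolding H_sys_def by simp_all
  have u3: "U J3 = 0" using lin_eqs_x1_zero[OF L x1] n3 by simp
  define y1 where "y1 = (\<lambda>i. U J2 * unit_vec I1 i)"
  define y2 where "y2 = (\<lambda>i. - tri P (unit_vec I2) (unit_vec i) (perp (X J3)))"
  note E = quad3_solution[OF quad_eqsD(3)[OF Q] y1_def y2_def]
  define V3 where "V3 r = tri P (perp y1) (perp y2) (unit_vec r)" for r
  have "V3 I1 * perp (X J3) I1 + V3 I2 * perp (X J3) I2 = tri P (perp y1) (perp y2) (perp (X J3))"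
    using tri_expand3[of P "perp y1" "perp y2" "perp (X J3)"] by (simp add: V3_def algebra_simps)
  also have "\<dots> = perp y1 I1 * (U J1 * y1 I1) + perp y1 I2 * (U J1 * y1 I2)"
    by (subst tri_expand1) (simp add: E)
  also have "\<dots> = 0" by (simp add: perp_def algebra_simps)
  finally obtain k3 where V3: "V3 r = k3 * X J3 r" for r
    using parallel_if_perp_orthogonal[of V3 "X J3"] n3 nonzero_ex by metis
  have ny2: "nonzero y2"
  proof (rule ccontr)
    assume "\<not> nonzero y2"
    then have "det2 (\<lambda>a b. tri P (unit_vec a) (unit_vec b) (perp (X J3))) = 0"
      unfolding nonzero_def y2_def det2_def by auto
    then show False using quad_eqsD(3)[OF Q] u1 u2 by simp
  qed
  define U' where "U' t = U(J3 := t * t * k3)" for t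
  define X' where "X' t = X(J1 := (\<lambda>i. t * y1 i), J2 := (\<lambda>i. t * y2 i))" for t
  have "point (U' 0) (X' 0) P v \<in> zclosure generic_x21"
  proof (rule point_in_zclosure_curve)
    show "univ_poly (\<lambda>t. U' t k)" "univ_poly (\<lambda>t. X' t j i)" "univ_poly (\<lambda>t. P a b c)"
      for k j i a b c
      by (auto simp: U'_def X'_def if_distribR intro!: univ_poly_intros)
    fix t :: complex assume t: "t \<noteq> 0"
    show "point (U' t) (X' t) P v \<in> generic_x21"
    proof (rule lin_eqs_in_generic_x21)
      show "lin_eqs (U' t) (X' t) P" unfolding lin_eqs_def
      proof (intro conjI allI)
        fix r
        show "U' t J1 * X' t J1 r = tri P (unit_vec r) (perp (X' t J2)) (perp (X' t J3))"
          using E(1)[of r] by (simp add: U'_def X'_def tri_simps)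
        show "U' t J2 * X' t J2 r = tri P (perp (X' t J1)) (unit_vec r) (perp (X' t J3))"
          using E(2)[of r] by (simp add: U'_def X'_def tri_simps)
        show "U' t J3 * X' t J3 r = tri P (perp (X' t J1)) (perp (X' t J2)) (unit_vec r)"
          using V3[of r] by (simp add: U'_def X'_def tri_simps V3_def algebra_simps)
      qed
      show "nonzero (X' t J1)" "nonzero (X' t J2)" "nonzero (X' t J3)" "X' t J1 I2 = 0"
        using t u2 ny2 n3 by (simp_all add: X'_def nonzero_def unit_vec_def y1_def)
    qed
  qed
  moreover have "U' 0 = U" "X' 0 = X"
    using u3 x1 x2 by (auto simp: U'_def X'_def fun_eq_iff)
  ultimately show ?thesis by simp
qed

text \<open>When u_2 = 0, x_2 can leave 0 alone, along a kernel vector of the slice p(-, -, perp x_3).\<close>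
lemma x12_zero_u2_zero_in_zclosure:
  assumes H: "H_sys U X P" and x1: "X J1 = (\<lambda>i. 0)" and x2: "X J2 = (\<lambda>i. 0)" and n3: "nonzero (X J3)"
    and u2: "U J2 = 0"
  shows "point U X P v \<in> zclosure generic_x21"
proof -
  have L: "lin_eqs U X P" and Q: "quad_eqs U X P" using H unfolding H_sys_def by simp_all
  have u3: "U J3 = 0" using lin_eqs_x1_zero[OF L x1] n3 by simp
  define B where "B a b = tri P (unit_vec a) (unit_vec b) (perp (X J3))" for a b
  have "det2 B = 0" using quad_eqsD(3)[OF Q] u2 unfolding B_def by simp
  then obtain y where ny: "nonzero y" and w: "\<And>r. B r I1 * perp y I1 + B r I2 * perp y I2 = 0"
    using det2_eq_0_imp_perp_kernel by metis
  have K: "tri P (unit_vec r) (perp y) (perp (X J3)) = 0" for r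
    using w[of r] by (subst tri_expand2) (simp add: B_def mult.commute)
  have dA: "det2 (\<lambda>a c. tri P (unit_vec a) (perp y) (unit_vec c)) = 0"
  proof (rule kernel_imp_det2_eq_0[OF _ nonzero_perp[OF n3]])
    show "tri P (unit_vec r) (perp y) (unit_vec I1) * perp (X J3) I1
        + tri P (unit_vec r) (perp y) (unit_vec I2) * perp (X J3) I2 = 0" for r
      using K[of r] tri_expand3[of P "unit_vec r" "perp y" "perp (X J3)"] by (simp add: algebra_simps)
  qed
  define X' where "X' t = X(J2 := (\<lambda>i. t * y i))" for t
  have "point U (X' 0) P v \<in> zclosure (stratum False True True)"
  proof (rule point_in_zclosure_curve)
    show "univ_poly (\<lambda>t. U k)" "univ_poly (\<lambda>t. X' t j i)" "univ_poly (\<lambda>t. P a b c)" for k j i a b c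
      by (auto simp: X'_def if_distribR intro!: univ_poly_intros)
    fix t :: complex assume t: "t \<noteq> 0"
    have "lin_eqs U (X' t) P"
      using K x1 u2 u3 unfolding lin_eqs_def by (simp add: X'_def tri_simps)
    moreover have "quad_eqs U (X' t) P"
      using quad_eqsD(3)[OF Q] dA x1 u2 u3 unfolding quad_eqs_def
      by (simp add: X'_def tri_simps det2_zero_matrix det2_scale)
    moreover have "\<not> nonzero (X' t J1)" "nonzero (X' t J2)" "nonzero (X' t J3)"
      using x1 ny n3 t by (auto simp: X'_def nonzero_def)
    ultimately show "point U (X' t) P v \<in> stratum False True True"
      by (simp add: H_sys_def)
  qed
  moreover have "X' 0 = X" using x2 by (auto simp: X'_def fun_eq_iff)
  moreover have "stratum False True True \<subseteq> zclosure generic_x21"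
    using x1_zero_in_zclosure by (intro stratum_subsetI) (simp add: not_nonzero_iff)
  ultimately show ?thesis using zclosure_trans by simp
qed

lemma x12_zero_u12_nonzero_subset:
  "{a \<in> stratum False False True. a (Uc J1) \<noteq> 0 \<and> a (Uc J2) \<noteq> 0} \<subseteq> zclosure generic_x21"
proof clarify
  fix a assume "a \<in> stratum False False True" "a (Uc J1) \<noteq> 0" "a (Uc J2) \<noteq> 0"
  then have "point (u_of a) (x_of a) (p_of a) (a Vc) \<in> zclosure generic_x21"
    by (intro x12_zero_u12_nonzero_in_zclosure)
      (auto simp: stratum_def H_eqs_iff not_nonzero_iff u_of_def)
  then show "a \<in> zclosure generic_x21" by (simp add: point_coords)
qed

text \<open>For u_1 = 0 and u_2 nonzero, u_1 = t is switched on, and a rank one correction of p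
  (of the form t e_i (x) e_j (x) e_p) keeps the third quadric; which correction works
  depends on whether the slice p(-, -, perp x_3) vanishes.\<close>
lemma x12_zero_u1_zero_slice_nonzero_in_zclosure:
  assumes H: "H_sys U X P" and x1: "X J1 = (\<lambda>i. 0)" and x2: "X J2 = (\<lambda>i. 0)" and n3: "nonzero (X J3)"
    and u1: "U J1 = 0" and u2: "U J2 \<noteq> 0"
    and B0: "tri P (unit_vec a0) (unit_vec b0) (perp (X J3)) \<noteq> 0"
  shows "point U X P v \<in> zclosure generic_x21"
proof -
  have L: "lin_eqs U X P" and Q: "quad_eqs U X P" using H unfolding H_sys_def by simp_all
  have u3: "U J3 = 0" using lin_eqs_x1_zero[OF L x1] n3 by simp
  define B where "B a b = tri P (unit_vec a) (unit_vec b) (perp (X J3))" for a b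
  have dB: "det2 B = 0" using quad_eqsD(3)[OF Q] u1 unfolding B_def by simp
  obtain i j where ij: "adj2 B j i \<noteq> 0" using adj2_nonzero[of B a0 b0] B0 unfolding B_def by blast
  obtain p where p: "perp (X J3) p \<noteq> 0" using nonzero_ex[OF nonzero_perp[OF n3]] by blast
  define c where "c = - U J2 / (adj2 B j i * perp (X J3) p)"
  have c: "c * perp (X J3) p * adj2 B j i = - U J2" using ij p unfolding c_def by simp
  define U' where "U' t = U(J1 := t)" for t
  define P' where "P' t = (\<lambda>a b d. P a b d + t * (c * (unit_vec i a * unit_vec j b * unit_vec p d)))" for t
  have "point (U' 0) X (P' 0) v \<in> zclosure {a \<in> stratum False False True. a (Uc J1) \<noteq> 0 \<and> a (Uc J2) \<noteq> 0}"
  proof (rule point_in_zclosure_curve)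
    show "univ_poly (\<lambda>t. U' t k)" "univ_poly (\<lambda>t. X j i')" "univ_poly (\<lambda>t. P' t a b d)" for k j i' a b d
      by (auto simp: U'_def P'_def intro!: univ_poly_intros)
    fix t :: complex assume t: "t \<noteq> 0"
    have slice: "(\<lambda>a b. tri (P' t) (unit_vec a) (unit_vec b) (perp (X J3)))
        = (\<lambda>a b. B a b + (t * c * perp (X J3) p) * (unit_vec i a * unit_vec j b))"
      by (intro ext) (simp only: P'_def tri_add_tensor tri_scale_tensor tri_rank_one B_def,
          simp add: unit_vec_sym algebra_simps)
    have "lin_eqs (U' t) X (P' t)"
      using x1 x2 u3 unfolding lin_eqs_def by (simp add: U'_def P'_def tri_simps)
    moreover have "quad_eqs (U' t) X (P' t)"
      unfolding quad_eqs_def slice det2_add_rank_one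
    proof (intro conjI)
      show "U' t J1 * U' t J2 + (det2 B + t * c * perp (X J3) p * adj2 B j i) = 0"
        using dB c by (simp add: U'_def, algebra)
    qed (use x1 x2 u3 in \<open>simp_all add: U'_def P'_def tri_simps det2_zero_matrix\<close>)
    ultimately show "point (U' t) X (P' t) v \<in> {a \<in> stratum False False True. a (Uc J1) \<noteq> 0 \<and> a (Uc J2) \<noteq> 0}"
      using x1 x2 n3 t u2 by (simp add: H_sys_def U'_def nonzero_def)
  qed
  moreover have "U' 0 = U" "P' 0 = P" using u1 by (auto simp: U'_def P'_def fun_eq_iff)
  ultimately show ?thesis using zclosure_trans[OF _ x12_zero_u12_nonzero_subset] by simp
qed

lemma x12_zero_u1_zero_slice_zero_in_zclosure:
  assumes H: "H_sys U X P" and x1: "X J1 = (\<lambda>i. 0)" and x2: "X J2 = (\<lambda>i. 0)" and n3: "nonzero (X J3)"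
    and u1: "U J1 = 0" and u2: "U J2 \<noteq> 0"
    and B0: "\<And>a b. tri P (unit_vec a) (unit_vec b) (perp (X J3)) = 0"
  shows "point U X P v \<in> zclosure generic_x21"
proof -
  have L: "lin_eqs U X P" using H unfolding H_sys_def by simp
  have u3: "U J3 = 0" using lin_eqs_x1_zero[OF L x1] n3 by simp
  obtain p where p: "perp (X J3) p \<noteq> 0" using nonzero_ex[OF nonzero_perp[OF n3]] by blast
  define c where "c = 1 / perp (X J3) p"
  have c: "c * perp (X J3) p = 1" using p unfolding c_def by simp
  define U' where "U' t = U(J1 := t * t)" for t
  define P' where "P' t = (\<lambda>a b d. P a b d + t * (c * (unit_vec I1 a * unit_vec I1 b * unit_vec p d))
        + t * ((- U J2 * c) * (unit_vec I2 a * unit_vec I2 b * unit_vec p d)))" for t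
  have "point (U' 0) X (P' 0) v \<in> zclosure {a \<in> stratum False False True. a (Uc J1) \<noteq> 0 \<and> a (Uc J2) \<noteq> 0}"
  proof (rule point_in_zclosure_curve)
    show "univ_poly (\<lambda>t. U' t k)" "univ_poly (\<lambda>t. X j i)" "univ_poly (\<lambda>t. P' t a b d)" for k j i a b d
      by (auto simp: U'_def P'_def intro!: univ_poly_intros)
    fix t :: complex assume t: "t \<noteq> 0"
    have slice: "tri (P' t) (unit_vec a) (unit_vec b) (perp (X J3)) =
        t * (unit_vec a I1 * unit_vec b I1) - t * U J2 * (unit_vec a I2 * unit_vec b I2)" for a b
      using B0[of a b] c by (simp only: P'_def tri_add_tensor tri_scale_tensor tri_rank_one, algebra)
    have "lin_eqs (U' t) X (P' t)"
      using x1 x2 u3 unfolding lin_eqs_def by (simp add: U'_def P'_def tri_simps)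
    moreover have "quad_eqs (U' t) X (P' t)"
      unfolding quad_eqs_def slice
      using x1 x2 u3 by (simp add: U'_def P'_def tri_simps det2_zero_matrix det2_def unit_vec_def algebra_simps)
    ultimately show "point (U' t) X (P' t) v \<in> {a \<in> stratum False False True. a (Uc J1) \<noteq> 0 \<and> a (Uc J2) \<noteq> 0}"
      using x1 x2 n3 t u2 by (simp add: H_sys_def U'_def nonzero_def)
  qed
  moreover have "U' 0 = U" "P' 0 = P" using u1 by (auto simp: U'_def P'_def fun_eq_iff)
  ultimately show ?thesis using zclosure_trans[OF _ x12_zero_u12_nonzero_subset] by simp
qed

lemma x12_zero_in_zclosure:
  assumes "H_sys U X P" "X J1 = (\<lambda>i. 0)" "X J2 = (\<lambda>i. 0)" "nonzero (X J3)"
  shows "point U X P v \<in> zclosure generic_x21"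
proof -
  consider "U J2 = 0" | "U J1 \<noteq> 0" "U J2 \<noteq> 0"
    | a b where "U J1 = 0" "U J2 \<noteq> 0" "tri P (unit_vec a) (unit_vec b) (perp (X J3)) \<noteq> 0"
    | "U J1 = 0" "U J2 \<noteq> 0" "\<And>a b. tri P (unit_vec a) (unit_vec b) (perp (X J3)) = 0"
    by blast
  then show ?thesis
    by cases (use assms in \<open>blast intro: x12_zero_u2_zero_in_zclosure x12_zero_u12_nonzero_in_zclosure
        x12_zero_u1_zero_slice_nonzero_in_zclosure x12_zero_u1_zero_slice_zero_in_zclosure\<close>)+
qed

lemma x13_zero_in_zclosure:
  assumes H: "H_sys U X P" and "X J1 = (\<lambda>i. 0)" "nonzero (X J2)" "X J3 = (\<lambda>i. 0)"
  shows "point U X P v \<in> zclosure generic_x21"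
proof -
  have "swap23_pt (point U X P v) \<in> zclosure generic_x21"
    unfolding swap23_pt_point using H_sys_swap23[OF H] assms(2-4)
    by (intro x12_zero_in_zclosure) simp_all
  then have "swap23_pt (swap23_pt (point U X P v)) \<in> zclosure generic_x21"
    by (rule zclosure_invariant[OF polyfun_swap23_pt swap23_pt_generic_x21])
  then show ?thesis by (simp add: swap23_pt_involution)
qed

lemma x1_zero_stratum_subset:
  assumes "b2 \<or> b3"
  shows "stratum False b2 b3 \<subseteq> zclosure generic_x21"
proof (rule stratum_subsetI)
  fix U X P v
  assume H: "H_sys U X P" and "nonzero (X J1) = False" "nonzero (X J2) = b2" "nonzero (X J3) = b3"
  then have x1: "X J1 = (\<lambda>i. 0)"
    and "nonzero (X J2) \<and> nonzero (X J3) \<or> X J2 = (\<lambda>i. 0) \<and> nonzero (X J3)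
      \<or> nonzero (X J2) \<and> X J3 = (\<lambda>i. 0)"
    using assms by (auto simp flip: not_nonzero_iff)
  then show "point U X P v \<in> zclosure generic_x21"
    using x1_zero_in_zclosure[OF H x1] x12_zero_in_zclosure[OF H x1] x13_zero_in_zclosure[OF H x1]
    by blast
qed

lemma x123_zero_quad_eqs:
  assumes "quad_eqs U X P" "X J1 = (\<lambda>i. 0)" "X J2 = (\<lambda>i. 0)" "X J3 = (\<lambda>i. 0)"
  shows "U J2 * U J3 = 0" "U J3 * U J1 = 0" "U J1 * U J2 = 0"
  using quad_eqsD[OF assms(1)] assms(2-4) by (simp_all add: tri_simps det2_zero_matrix)

text \<open>With all u_j = 0 but u_1, x_2 and x_3 leave 0 together, along y_2 with p(-, perp y_2, -)
  singular and y_3 spanning its kernel.\<close>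
lemma x123_zero_u23_zero_in_zclosure:
  assumes H: "H_sys U X P" and x: "X J1 = (\<lambda>i. 0)" "X J2 = (\<lambda>i. 0)" "X J3 = (\<lambda>i. 0)"
    and u: "U J2 = 0" "U J3 = 0"
  shows "point U X P v \<in> zclosure generic_x21"
proof -
  obtain y2 where y2: "nonzero y2" and dA: "det2 (\<lambda>a c. tri P (unit_vec a) (perp y2) (unit_vec c)) = 0"
    using singular_slice2 by blast
  obtain y3 where y3: "nonzero y3" and w: "\<And>r. tri P (unit_vec r) (perp y2) (unit_vec I1) * perp y3 I1
      + tri P (unit_vec r) (perp y2) (unit_vec I2) * perp y3 I2 = 0"
    using det2_eq_0_imp_perp_kernel[OF dA] by blast
  have K: "tri P (unit_vec r) (perp y2) (perp y3) = 0" for r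
    using w[of r] by (subst tri_expand3) (simp add: mult.commute)
  have dA3: "det2 (\<lambda>a b. tri P (unit_vec a) (unit_vec b) (perp y3)) = 0"
  proof (rule kernel_imp_det2_eq_0[OF _ nonzero_perp[OF y2]])
    show "tri P (unit_vec r) (unit_vec I1) (perp y3) * perp y2 I1
        + tri P (unit_vec r) (unit_vec I2) (perp y3) * perp y2 I2 = 0" for r
      using K[of r] tri_expand2[of P "unit_vec r" "perp y2" "perp y3"] by (simp add: algebra_simps)
  qed
  define X' where "X' t = X(J2 := (\<lambda>i. t * y2 i), J3 := (\<lambda>i. t * y3 i))" for t
  have "point U (X' 0) P v \<in> zclosure (stratum False True True)"
  proof (rule point_in_zclosure_curve)
    show "univ_poly (\<lambda>t. U k)" "univ_poly (\<lambda>t. X' t j i)" "univ_poly (\<lambda>t. P a b c)" for k j i a b c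
      by (auto simp: X'_def if_distribR intro!: univ_poly_intros)
    fix t :: complex assume t: "t \<noteq> 0"
    have "lin_eqs U (X' t) P"
      using K x u unfolding lin_eqs_def by (simp add: X'_def tri_simps)
    moreover have "quad_eqs U (X' t) P"
      using dA dA3 x u unfolding quad_eqs_def by (simp add: X'_def tri_simps det2_zero_matrix det2_scale)
    ultimately show "point U (X' t) P v \<in> stratum False True True"
      using x y2 y3 t by (simp add: H_sys_def X'_def nonzero_def)
  qed
  moreover have "X' 0 = X" using x by (auto simp: X'_def fun_eq_iff)
  ultimately show ?thesis using zclosure_trans[OF _ x1_zero_stratum_subset] by simp
qed

lemma x123_zero_u2_nonzero_in_zclosure:
  assumes H: "H_sys U X P" and x: "X J1 = (\<lambda>i. 0)" "X J2 = (\<lambda>i. 0)" "X J3 = (\<lambda>i. 0)"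
    and u2: "U J2 \<noteq> 0"
  shows "point U X P v \<in> zclosure generic_x21"
proof -
  have Q: "quad_eqs U X P" using H unfolding H_sys_def by simp
  have u: "U J3 = 0" "U J1 = 0" using x123_zero_quad_eqs[OF Q x] u2 by simp_all
  obtain y3 where y3: "nonzero y3" and dA: "det2 (\<lambda>a b. tri P (unit_vec a) (unit_vec b) (perp y3)) = 0"
    using singular_slice3 by blast
  define X' where "X' t = X(J3 := (\<lambda>i. t * y3 i))" for t
  have "point U (X' 0) P v \<in> zclosure (stratum False False True)"
  proof (rule point_in_zclosure_curve)
    show "univ_poly (\<lambda>t. U k)" "univ_poly (\<lambda>t. X' t j i)" "univ_poly (\<lambda>t. P a b c)" for k j i a b c
      by (auto simp: X'_def if_distribR intro!: univ_poly_intros)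
    fix t :: complex assume t: "t \<noteq> 0"
    have "lin_eqs U (X' t) P"
      using x u unfolding lin_eqs_def by (simp add: X'_def tri_simps)
    moreover have "quad_eqs U (X' t) P"
      using dA x u unfolding quad_eqs_def by (simp add: X'_def tri_simps det2_zero_matrix det2_scale)
    ultimately show "point U (X' t) P v \<in> stratum False False True"
      using x y3 t by (simp add: H_sys_def X'_def nonzero_def)
  qed
  moreover have "X' 0 = X" using x by (auto simp: X'_def fun_eq_iff)
  ultimately show ?thesis using zclosure_trans[OF _ x1_zero_stratum_subset] by simp
qed

lemma x123_zero_u3_nonzero_in_zclosure:
  assumes H: "H_sys U X P" and x: "X J1 = (\<lambda>i. 0)" "X J2 = (\<lambda>i. 0)" "X J3 = (\<lambda>i. 0)"
    and u3: "U J3 \<noteq> 0"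
  shows "point U X P v \<in> zclosure generic_x21"
proof -
  have Q: "quad_eqs U X P" using H unfolding H_sys_def by simp
  have u: "U J2 = 0" "U J1 = 0" using x123_zero_quad_eqs[OF Q x] u3 by simp_all
  obtain y2 where y2: "nonzero y2" and dA: "det2 (\<lambda>a c. tri P (unit_vec a) (perp y2) (unit_vec c)) = 0"
    using singular_slice2 by blast
  define X' where "X' t = X(J2 := (\<lambda>i. t * y2 i))" for t
  have "point U (X' 0) P v \<in> zclosure (stratum False True False)"
  proof (rule point_in_zclosure_curve)
    show "univ_poly (\<lambda>t. U k)" "univ_poly (\<lambda>t. X' t j i)" "univ_poly (\<lambda>t. P a b c)" for k j i a b c
      by (auto simp: X'_def if_distribR intro!: univ_poly_intros)
    fix t :: complex assume t: "t \<noteq> 0"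
    have "lin_eqs U (X' t) P"
      using x u unfolding lin_eqs_def by (simp add: X'_def tri_simps)
    moreover have "quad_eqs U (X' t) P"
      using dA x u unfolding quad_eqs_def by (simp add: X'_def tri_simps det2_zero_matrix det2_scale)
    ultimately show "point U (X' t) P v \<in> stratum False True False"
      using x y2 t by (simp add: H_sys_def X'_def nonzero_def)
  qed
  moreover have "X' 0 = X" using x by (auto simp: X'_def fun_eq_iff)
  ultimately show ?thesis using zclosure_trans[OF _ x1_zero_stratum_subset] by simp
qed

lemma x1_zero_subset_zclosure_generic_x21:
  "coneH \<inter> {a. a (Xc I1 J1) = 0 \<and> a (Xc I2 J1) = 0} \<subseteq> zclosure generic_x21"
proof clarify
  fix a assume "a \<in> coneH" "a (Xc I1 J1) = 0" "a (Xc I2 J1) = 0"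
  then have H: "H_sys (u_of a) (x_of a) (p_of a)" and x1: "x_of a J1 = (\<lambda>i. 0)"
    by (auto simp: coneH_def H_eqs_iff x_of_def fun_eq_iff all_idx2)
  have "point (u_of a) (x_of a) (p_of a) (a Vc) \<in> zclosure generic_x21"
  proof (cases "nonzero (x_of a J2) \<or> nonzero (x_of a J3)")
    case True
    then show ?thesis
      using x1_zero_stratum_subset[OF True] H x1 by (auto simp: not_nonzero_iff)
  next
    case False
    then have "x_of a J2 = (\<lambda>i. 0)" "x_of a J3 = (\<lambda>i. 0)" by (simp_all add: not_nonzero_iff)
    then show ?thesis
      using x123_zero_u23_zero_in_zclosure[OF H x1] x123_zero_u2_nonzero_in_zclosure[OF H x1]
        x123_zero_u3_nonzero_in_zclosure[OF H x1] by blast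
  qed
  then show "a \<in> zclosure generic_x21" by (simp add: point_coords)
qed

section \<open>Irreducibility and the codimension bounds\<close>

lemma cycle_pt_coneH: "a \<in> coneH \<Longrightarrow> cycle_pt a \<in> coneH"
  by (simp add: coneH_def H_eqs_iff cycle_pt_def H_sys_cycle)

lemma x_of_cycle_pt: "x_of (cycle_pt a) j = x_of a (cycle j)"
  by (simp add: cycle_pt_def)

lemma x1_zero_in_zclosure_generic:
  assumes "a \<in> coneH" "x_of a J1 = (\<lambda>i. 0)"
  shows "a \<in> zclosure (stratum True True True)"
proof -
  have "a \<in> zclosure generic_x21"
    using assms x1_zero_subset_zclosure_generic_x21 by (auto simp: x_of_def fun_eq_iff)
  then show ?thesis
    using zclosure_mono[of generic_x21 "stratum True True True"] by (auto simp: generic_x21_def)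
qed

text \<open>The cyclic symmetry reduces every boundary point to one with x_1 = 0.\<close>
lemma coneH_subset_zclosure_generic: "coneH \<subseteq> zclosure (stratum True True True)"
proof
  fix a assume a: "a \<in> coneH"
  note invariant = zclosure_invariant[OF polyfun_cycle_pt cycle_pt_generic]
  consider "a \<in> stratum True True True" | j where "x_of a j = (\<lambda>i. 0)"
    using a unfolding coneH_def stratum_def not_nonzero_iff[symmetric] by blast
  then show "a \<in> zclosure (stratum True True True)"
  proof cases
    case 1
    then show ?thesis using zclosure_superset by blast
  next
    case (2 j)
    then show ?thesis
    proof (cases j)
      case J1
      then show ?thesis using 2 a x1_zero_in_zclosure_generic by simp
    next
      case J2
      then have "cycle_pt (cycle_pt a) \<in> zclosure (stratum True True True)"
        using 2 a by (intro x1_zero_in_zclosure_generic) (simp_all add: cycle_pt_coneH x_of_cycle_pt)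
      then show ?thesis using invariant[of "cycle_pt (cycle_pt a)"] by (simp add: cycle_pt_order3)
    next
      case J3
      then have "cycle_pt a \<in> zclosure (stratum True True True)"
        using 2 a by (intro x1_zero_in_zclosure_generic) (simp_all add: cycle_pt_coneH x_of_cycle_pt)
      then show ?thesis using invariant[OF invariant, of "cycle_pt a"] by (simp add: cycle_pt_order3)
    qed
  qed
qed

lemma coneH_eq_zclosure_range_param: "coneH = zclosure (range param)"
proof
  show "coneH \<subseteq> zclosure (range param)"
    using coneH_subset_zclosure_generic zclosure_mono[OF generic_subset_range_param] by blast
  show "zclosure (range param) \<subseteq> coneH"
    by (rule zclosure_minimal[OF zariski_closed_coneH]) (auto simp: coneH_def H_eqs_param)
qed

lemma irred_closed_coneH: "irred_closed coneH"
  unfolding coneH_eq_zclosure_range_param by (rule irred_closed_zclosure_image[OF polyfun_param])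

lemma H_eqs_fun_upd_v: "H_eqs (a(Vc := c)) \<longleftrightarrow> H_eqs a"
proof -
  have "u_of (a(Vc := c)) = u_of a" "x_of (a(Vc := c)) = x_of a" "p_of (a(Vc := c)) = p_of a"
    by (simp_all add: u_of_def x_of_def p_of_def fun_eq_iff)
  then show ?thesis by (simp only: H_eqs_iff)
qed

lemma codim_v_u1_zero: "codim coneH (coneH \<inter> {a. a Vc = 0 \<and> a (Uc J1) = 0}) \<ge> 2"
proof (rule codim_ge_2I[OF irred_closed_coneH])
  fix Y assume Y: "irred_closed Y" and YZ: "Y \<subseteq> coneH \<inter> {a. a Vc = 0 \<and> a (Uc J1) = 0}"
  then have v0: "y Vc = 0" if "y \<in> Y" for y using that by auto
  have "Y \<subseteq> cylinder Vc Y"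
    unfolding cylinder_def using v0 by (auto simp: fun_upd_idem)
  moreover obtain y where y: "y \<in> Y" using irred_closedD(1)[OF Y] by auto
  then have "y(Vc := 1) \<in> cylinder Vc Y - Y"
    unfolding cylinder_def using v0[of "y(Vc := 1)"] v0[OF y] by (auto simp: fun_upd_idem)
  moreover have "cylinder Vc Y \<subseteq> coneH \<inter> {a. a (Uc J1) = 0}"
    using YZ unfolding cylinder_def coneH_def by (auto simp: H_eqs_fun_upd_v)
  moreover have "param (\<lambda>p. case p of Gp j a b \<Rightarrow> unit_vec a b | _ \<Rightarrow> 1) \<in> coneH - {a. a (Uc J1) = 0}"
    by (simp add: coneH_def H_eqs_param) (simp add: param_def det_G_def tensor_Q_def unit_vec_def)
  ultimately have "Y \<subset> cylinder Vc Y" "cylinder Vc Y \<subset> coneH" by blast+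
  moreover have "irred_closed (cylinder Vc Y)" using Y v0 by (rule irred_closed_cylinder)
  ultimately show "\<exists>Y1. irred_closed Y1 \<and> Y \<subset> Y1 \<and> Y1 \<subset> coneH"
    by (intro exI[of _ "cylinder Vc Y"]) simp
qed

lemma codim_x1_zero: "codim coneH (coneH \<inter> {a. a (Xc I1 J1) = 0 \<and> a (Xc I2 J1) = 0}) \<ge> 2"
proof (rule codim_ge_2I[OF irred_closed_coneH])
  fix Y assume Y: "irred_closed Y" and YZ: "Y \<subseteq> coneH \<inter> {a. a (Xc I1 J1) = 0 \<and> a (Xc I2 J1) = 0}"
  let ?A = "zclosure (range param_x21)"
  have "Y \<subseteq> ?A"
    using YZ x1_zero_subset_zclosure_generic_x21 zclosure_mono[OF generic_x21_subset_range_param_x21]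
    by blast
  moreover have "param_x21 (\<lambda>p. 1) \<in> ?A - Y"
    using YZ zclosure_superset by (fastforce simp: param_x21_def param_def)
  moreover have "?A \<subseteq> coneH"
    by (rule zclosure_minimal[OF zariski_closed_coneH]) (auto simp: coneH_def param_x21_def H_eqs_param)
  moreover have "?A \<subseteq> {a. a (Xc I2 J1) = 0}"
    by (rule zclosure_minimal[OF zariski_closed_coord_zero]) (auto simp: param_x21_x21)
  moreover have "param (\<lambda>p. 1) \<in> coneH - {a. a (Xc I2 J1) = 0}"
    by (simp add: coneH_def H_eqs_param) (simp add: param_def)
  ultimately have "Y \<subset> ?A" "?A \<subset> coneH" by blast+
  then show "\<exists>Y1. irred_closed Y1 \<and> Y \<subset> Y1 \<and> Y1 \<subset> coneH"
    using irred_closed_zclosure_image[OF polyfun_param_x21] by (intro exI[of _ ?A]) simp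
qed

theorem lemma5p2:
  shows "codim coneH (coneH \<inter> {a. a Vc = 0 \<and> a (Uc J1) = 0}) \<ge> 2
       \<and> codim coneH (coneH \<inter> {a. a (Xc I1 J1) = 0 \<and> a (Xc I2 J1) = 0}) \<ge> 2"
  using codim_v_u1_zero codim_x1_zero by simp

end
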